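(* Let $d\ge1$, $n\ge3$, $u\in\mathbb{C}\setminus\{0\}$ and let $z,x_1,\ldots,x_{d-1}\in\mathbb{C}$ be the parameters of the Markov trace $\mathrm{tr}$, with $x_0=1$. Then $\mathrm{tr}$ passes to the quotient algebra $\mathrm{CTL}_{d,n}(u)$ if and only if $$(u+1)z^2\sum_{k=0}^{d-1}x_k+(u+2)z\sum_{k=0}^{d-1}E^{(k)}+\sum_{k=0}^{d-1}\mathrm{tr}\big(e_1^{(k)}e_2\big)=0.$$
   Context: The Yokonuma–Hecke algebra $\mathrm{Y}_{d,n}(u)$ is the unital associative $\mathbb{C}$-algebra with generators $g_1,\ldots,g_{n-1},t_1,\ldots,t_n$ and relations: $g_ig_j=g_jg_i$ for $|i-j|>1$; $g_{i+1}g_ig_{i+1}=g_ig_{i+1}g_i$; $t_it_j=t_jt_i$; $t_i^d=1$; $g_it_i=t_{i+1}g_i$; $g_it_{i+1}=t_ig_i$; $g_it_j=t_jg_i$ for $j\ne i,i+1$; $g_i^2=1+(u-1)e_i+(u-1)e_ig_i$, where $e_i=\frac1d\sum_{s=0}^{d-1}t_i^st_{i+1}^{d-s}$; $\mathrm{Y}_{d,n}(u)\subset\mathrm{Y}_{d,n+1}(u)$ naturally. Also $e_i^{(m)}=\frac1d\sum_{s=0}^{d-1}t_i^{m+s}t_{i+1}^{d-s}$. For $w\in S_n$ with reduced expression $s_{i_1}\cdots s_{i_k}$ put $g_w=g_{i_1}\cdots g_{i_k}$; $g_{i,i+1}=\sum_{w\in\langle s_i,s_{i+1}\rangle}g_w$,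 and $c_{i,i+1}=\sum_{a,b,c=0}^{d-1}t_i^at_{i+1}^bt_{i+2}^c\,g_{i,i+1}$ for $1\le i\le n-2$. $\mathrm{CTL}_{d,n}(u)$ is the quotient of $\mathrm{Y}_{d,n}(u)$ by the two-sided ideal generated by all $c_{i,i+1}$. For complex $z,x_1,\ldots,x_{d-1}$, $\mathrm{tr}$ is the unique linear map on $\bigcup_n\mathrm{Y}_{d,n}(u)$ with $\mathrm{tr}(ab)=\mathrm{tr}(ba)$, $\mathrm{tr}(1)=1$, $\mathrm{tr}(ag_n)=z\,\mathrm{tr}(a)$, $\mathrm{tr}(at_{n+1}^s)=x_s\,\mathrm{tr}(a)$ for $a,b\in\mathrm{Y}_{d,n}(u)$. Indices of $x$ are taken mod $d$ and $E^{(m)}=\frac1d\sum_{s=0}^{d-1}x_{m+s}x_{d-s}$. "$\mathrm{tr}$ passes to $\mathrm{CTL}_{d,n}(u)$" means $\mathrm{tr}$ vanishes on the defining ideal. *)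

theory Defs
  imports Complex_Main
begin

text \<open>Generators of the Yokonuma-Hecke algebras: G i stands for g_i, T i for t_i (i >= 1).
  Elements of the free algebra over the complex numbers are represented as formal
  finite linear combinations of words, i.e. lists of (coefficient, word) pairs.\<close>

datatype gen = G nat | T nat

type_synonym fsum = "(complex \<times> gen list) list"

definition wd :: "gen list \<Rightarrow> fsum" where
  "wd w = [(1, w)]"

definition one :: fsum where
  "one = [(1, [])]"

definition fmul :: "fsum \<Rightarrow> fsum \<Rightarrow> fsum" where
  "fmul p q = [(fst a * fst b, snd a @ snd b). a \<leftarrow> p, b \<leftarrow> q]"

definition fscale :: "complex \<Rightarrow> fsum \<Rightarrow> fsum" where
  "fscale c p = map (\<lambda>(c', w). (c * c', w)) p"

definition fminus :: "fsum \<Rightarrow> fsum \<Rightarrow> fsum" where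
  "fminus p q = p @ fscale (-1) q"

definition ftr :: "(gen list \<Rightarrow> complex) \<Rightarrow> fsum \<Rightarrow> complex" where
  "ftr tr p = (\<Sum>a\<leftarrow>p. fst a * tr (snd a))"

definition ee :: "nat \<Rightarrow> nat \<Rightarrow> nat \<Rightarrow> fsum" where
  "ee d m i = [(1 / of_nat d, replicate (m + s) (T i) @ replicate (d - s) (T (Suc i))). s \<leftarrow> [0..<d]]"

text \<open>Defining relations of Y_{d,n}(u) (for all n), written as lhs - rhs.\<close>
definition yh_rels :: "nat \<Rightarrow> complex \<Rightarrow> fsum set" where
  "yh_rels d u =
     {fminus (wd [G i, G j]) (wd [G j, G i]) | i j. 1 \<le> i \<and> 1 \<le> j \<and> (i + 1 < j \<or> j + 1 < i)}
   \<union> {fminus (wd [G (i+1), G i, G (i+1)]) (wd [G i, G (i+1), G i]) | i. 1 \<le> i}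
   \<union> {fminus (wd [T i, T j]) (wd [T j, T i]) | i j. 1 \<le> i \<and> 1 \<le> j}
   \<union> {fminus (wd (replicate d (T i))) one | i. 1 \<le> i}
   \<union> {fminus (wd [G i, T i]) (wd [T (i+1), G i]) | i. 1 \<le> i}
   \<union> {fminus (wd [G i, T (i+1)]) (wd [T i, G i]) | i. 1 \<le> i}
   \<union> {fminus (wd [G i, T j]) (wd [T j, G i]) | i j. 1 \<le> i \<and> 1 \<le> j \<and> j \<noteq> i \<and> j \<noteq> i + 1}
   \<union> {fminus (wd [G i, G i])
        (one @ fscale (u - 1) (ee d 0 i) @ fscale (u - 1) (fmul (ee d 0 i) (wd [G i]))) | i. 1 \<le> i}"

definition valid_word :: "gen list \<Rightarrow> bool" where
  "valid_word w = (\<forall>g\<in>set w. case g of G i \<Rightarrow> 1 \<le> i | T i \<Rightarrow> 1 \<le> i)"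

text \<open>Words in the generators of Y_{d,n}: g_1..g_{n-1}, t_1..t_n.\<close>
definition words :: "nat \<Rightarrow> gen list set" where
  "words n = {w. \<forall>g\<in>set w. case g of G i \<Rightarrow> 1 \<le> i \<and> i < n | T i \<Rightarrow> 1 \<le> i \<and> i \<le> n}"

text \<open>tr is (the values on words of) the Markov trace with parameters z, x_1..x_{d-1}:
  its linear extension vanishes on the ideal of defining relations (so it is a linear map
  on the union of the Y_{d,n}(u)), and it satisfies the trace/Markov rules.\<close>
definition markov_trace ::
  "nat \<Rightarrow> complex \<Rightarrow> complex \<Rightarrow> (nat \<Rightarrow> complex) \<Rightarrow> (gen list \<Rightarrow> complex) \<Rightarrow> bool" where
  "markov_trace d u z x tr \<longleftrightarrow>
     (\<forall>r\<in>yh_rels d u. \<forall>a b. valid_word a \<longrightarrow> valid_word b \<longrightarrow>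
          ftr tr (fmul (fmul (wd a) r) (wd b)) = 0)
   \<and> (\<forall>a b. valid_word a \<longrightarrow> valid_word b \<longrightarrow> tr (a @ b) = tr (b @ a))
   \<and> tr [] = 1
   \<and> (\<forall>n a. 1 \<le> n \<longrightarrow> a \<in> words n \<longrightarrow> tr (a @ [G n]) = z * tr a)
   \<and> (\<forall>n a s. a \<in> words n \<longrightarrow> 1 \<le> s \<longrightarrow> s < d \<longrightarrow>
          tr (a @ replicate s (T (Suc n))) = x s * tr a)"

text \<open>g_{i,i+1} = sum of g_w over w in <s_i, s_{i+1}>.\<close>
definition gsum :: "nat \<Rightarrow> fsum" where
  "gsum i = one @ wd [G i] @ wd [G (i+1)] @ wd [G i, G (i+1)] @ wd [G (i+1), G i]
            @ wd [G i, G (i+1), G i]"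

definition cc :: "nat \<Rightarrow> nat \<Rightarrow> fsum" where
  "cc d i = fmul [(1, replicate a (T i) @ replicate b (T (i+1)) @ replicate c (T (i+2))).
                   a \<leftarrow> [0..<d], b \<leftarrow> [0..<d], c \<leftarrow> [0..<d]] (gsum i)"

definition EE :: "nat \<Rightarrow> (nat \<Rightarrow> complex) \<Rightarrow> nat \<Rightarrow> complex" where
  "EE d x m = (1 / of_nat d) * (\<Sum>s<d. x ((m + s) mod d) * x ((d - s) mod d))"

end

theory Submission
  imports Defs "HOL-Library.Multiset" "HOL-Combinatorics.Transposition"
begin

text \<open>Write \<open>c_i\<close> for \<open>c_{i,i+1}\<close>. Since the \<open>t\<close>-sum in \<open>c_i\<close> absorbs \<open>t_i, t_{i+1}, t_{i+2}\<close> and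
  the idempotents \<open>e_i, e_{i+1}\<close>, the quadratic relation turns \<open>g_i c_i\<close> and \<open>g_{i+1} c_i\<close>
  into \<open>u c_i\<close>; hence \<open>tr (w c_1) = 0\<close> for all words \<open>w\<close> of \<open>Y_{d,3}\<close> once \<open>tr (c_1) = 0\<close>.
  A Jones-type spanning argument (modulo the relations every word of \<open>Y_{d,n+1}\<close> is a
  combination of words with at most one \<open>g_n\<close>) together with the Markov property lifts this to all
  words of \<open>Y_{d,n}\<close>, and the trace property moves \<open>q\<close> to the left. Conjugation by the
  invertible element \<open>g_i g_{i+1} g_{i+2}\<close> carries \<open>c_i\<close> to \<open>c_{i+1}\<close>, so everything reduces to
  \<open>tr (c_1) = 0\<close>. Finally \<open>tr (c_1) = S^3 + (u+2) d z S^2 + (u+1) d^2 z^2 S\<close> with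
  \<open>S = \<Sum>\<^sub>k x_k\<close>, which is \<open>d^2\<close> times the left-hand side of the stated condition.\<close>

section \<open>Formal sums and words\<close>

lemma ftr_Nil [simp]: "ftr f [] = 0"
  by (simp add: ftr_def)
lemma ftr_Cons [simp]: "ftr f (a # p) = fst a * f (snd a) + ftr f p"
  by (simp add: ftr_def)
lemma ftr_append [simp]: "ftr f (p @ q) = ftr f p + ftr f q"
  by (simp add: ftr_def)
lemma ftr_wd [simp]: "ftr f (wd w) = f w"
  by (simp add: wd_def)
lemma ftr_one [simp]: "ftr f one = f []"
  by (simp add: one_def)
lemma ftr_fscale [simp]: "ftr f (fscale c p) = c * ftr f p"
  by (induct p) (auto simp: fscale_def algebra_simps)
lemma ftr_fminus [simp]: "ftr f (fminus p q) = ftr f p - ftr f q"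
  by (simp add: fminus_def)
lemma ftr_concat: "ftr f (concat ps) = (\<Sum>p\<leftarrow>ps. ftr f p)"
  by (induct ps) auto
lemma ftr_map: "ftr f (map g xs) = (\<Sum>a\<leftarrow>xs. fst (g a) * f (snd (g a)))"
  by (induct xs) auto
lemma ftr_add: "ftr (\<lambda>v. f v + g v) Q = ftr f Q + ftr g Q"
  by (induct Q) (auto simp: algebra_simps)
lemma ftr_sum: "ftr (\<lambda>v. \<Sum>a\<in>A. f a v) Q = (\<Sum>a\<in>A. ftr (f a) Q)"
  by (induct Q) (auto simp: algebra_simps sum.distrib sum_distrib_left)
lemma ftr_eq_0: "(\<And>p. p \<in> set Q \<Longrightarrow> f (snd p) = 0) \<Longrightarrow> ftr f Q = 0"
  by (induct Q) auto

lemma snd_set_fscale [simp]: "snd ` set (fscale a p) = snd ` set p"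
  by (force simp: fscale_def)

lemma ftr_fmul: "ftr f (fmul p q) = (\<Sum>a\<leftarrow>p. fst a * ftr (\<lambda>w. f (snd a @ w)) q)"
proof (induct p)
  case Nil
  then show ?case by (simp add: fmul_def)
next
  case (Cons a p)
  have "ftr f (map (\<lambda>b. (fst a * fst b, snd a @ snd b)) q) = fst a * ftr (\<lambda>w. f (snd a @ w)) q"
    by (induct q) (auto simp: algebra_simps)
  with Cons show ?case by (simp add: fmul_def)
qed

lemma ftr_in_context: "ftr f (fmul (fmul (wd a) r) (wd b)) = ftr (\<lambda>w. f (a @ w @ b)) r"
  by (simp add: ftr_fmul ftr_def wd_def fmul_def comp_def)

lemma sum_list_map_upt_0: "(\<Sum>a\<leftarrow>[0..<n]. f a) = (\<Sum>a<n. f a)"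
  by (simp add: interv_sum_list_conv_sum_set_nat atLeast0LessThan)

lemma sum_list_concat_map: "sum_list (map f (concat xss)) = sum_list (map (\<lambda>xs. sum_list (map f xs)) xss)"
  by (induct xss) auto

lemma append_replicate_replicate: "replicate m g @ replicate n g @ ys = replicate (m + n) g @ ys"
  by (simp add: replicate_add)

lemma valid_word_append [simp]: "valid_word (a @ b) \<longleftrightarrow> valid_word a \<and> valid_word b"
  by (auto simp: valid_word_def)
lemma valid_word_Cons_G [simp]: "valid_word (G i # b) \<longleftrightarrow> 1 \<le> i \<and> valid_word b"
  by (auto simp: valid_word_def)
lemma valid_word_Cons_T [simp]: "valid_word (T i # b) \<longleftrightarrow> 1 \<le> i \<and> valid_word b"
  by (auto simp: valid_word_def)
lemma valid_word_Nil [simp]: "valid_word []"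
  by (simp add: valid_word_def)
lemma valid_word_replicate [simp]: "valid_word (replicate k g) \<longleftrightarrow> k = 0 \<or> valid_word [g]"
  by (auto simp: valid_word_def)

lemma words_append [simp]: "a @ b \<in> words n \<longleftrightarrow> a \<in> words n \<and> b \<in> words n"
  by (auto simp: words_def)
lemma words_Cons_G [simp]: "G i # b \<in> words n \<longleftrightarrow> 1 \<le> i \<and> i < n \<and> b \<in> words n"
  by (auto simp: words_def)
lemma words_Cons_T [simp]: "T i # b \<in> words n \<longleftrightarrow> 1 \<le> i \<and> i \<le> n \<and> b \<in> words n"
  by (auto simp: words_def)
lemma words_Nil [simp]: "[] \<in> words n"
  by (simp add: words_def)
lemma words_replicate [simp]: "replicate k g \<in> words n \<longleftrightarrow> k = 0 \<or> [g] \<in> words n"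
  by (auto simp: words_def)
lemma words_mono: "w \<in> words n \<Longrightarrow> n \<le> m \<Longrightarrow> w \<in> words m"
  by (auto simp: words_def split: gen.splits)
lemma words_imp_valid_word: "w \<in> words n \<Longrightarrow> valid_word w"
  by (auto simp: words_def valid_word_def split: gen.splits)

lemma G_notin_words: "w \<in> words m \<Longrightarrow> m \<le> N \<Longrightarrow> G N \<notin> set w"
  by (auto simp: words_def)

section \<open>Sums over residues modulo \<open>d\<close>\<close>

lemma sum_lessThan_periodic_Suc:
  assumes "\<And>a. g (a + d) = g a"
  shows "(\<Sum>a<d. g (Suc a)) = (\<Sum>a<(d::nat). g a)"
proof (cases d)
  case (Suc e)
  have "(\<Sum>a<d. g (Suc a)) = (\<Sum>a<e. g (Suc a)) + g 0"
    using Suc assms[of 0] by simp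
  also have "\<dots> = (\<Sum>a<d. g a)"
    using Suc sum.lessThan_Suc_shift[of g e] by (simp add: add.commute)
  finally show ?thesis .
qed simp

lemma sum_lessThan_periodic_shift:
  assumes "\<And>a. g (a + d) = g a"
  shows "(\<Sum>a<d. g (a + k)) = (\<Sum>a<(d::nat). g a)"
  using assms
proof (induct k arbitrary: g)
  case (Suc k)
  have "(\<Sum>a<d. g (a + Suc k)) = (\<Sum>a<d. g (Suc a + k))"
    by simp
  also have "\<dots> = (\<Sum>a<d. g (a + k))"
    by (rule sum_lessThan_periodic_Suc[where g="\<lambda>a. g (a + k)"]) (metis Suc.prems add.commute add.left_commute)
  finally show ?case using Suc by simp
qed simp

lemma sum_lessThan_mod_shift: "(\<Sum>a<d. f ((a + k) mod d)) = (\<Sum>a<(d::nat). f a)"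
proof -
  have "(\<Sum>a<d. f ((a + k) mod d)) = (\<Sum>a<d. f (a mod d))"
    by (rule sum_lessThan_periodic_shift[where g="\<lambda>a. f (a mod d)"]) simp
  also have "\<dots> = (\<Sum>a<d. f a)"
    by (rule sum.cong) auto
  finally show ?thesis .
qed

lemma sum_lessThan_mod_shift': "(\<Sum>a<d. f ((k + a) mod d)) = (\<Sum>a<(d::nat). f a)"
  using sum_lessThan_mod_shift[of f k d] by (simp add: add.commute)

lemma sum_lessThan_mod_reflect: "(\<Sum>s<d. f ((d - s) mod d)) = (\<Sum>s<(d::nat). f s)"
proof -
  have "(\<Sum>s<d. f ((d - s) mod d)) = (\<Sum>s<d. (\<lambda>t. f ((t + 1) mod d)) (d - Suc s))"
    by (rule sum.cong) (auto simp: Suc_diff_Suc)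
  also have "\<dots> = (\<Sum>t<d. f ((t + 1) mod d))"
    by (rule sum.nat_diff_reindex)
  also have "\<dots> = (\<Sum>t<d. f t)"
    by (rule sum_lessThan_mod_shift)
  finally show ?thesis .
qed

lemma sum3_lessThan_mod_shift:
  assumes "\<And>a b c. f a b c = f (a mod d) (b mod d) (c mod d)"
  shows "(\<Sum>a<d. \<Sum>b<d. \<Sum>c<d. f (a + k1) (b + k2) (c + (k3::nat)))
       = (\<Sum>a<(d::nat). \<Sum>b<d. \<Sum>c<d. f a b c)"
proof -
  have "(\<Sum>a<d. \<Sum>b<d. \<Sum>c<d. f (a + k1) (b + k2) (c + k3))
      = (\<Sum>a<d. \<Sum>b<d. \<Sum>c<d. f ((a + k1) mod d) ((b + k2) mod d) ((c + k3) mod d))"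
    by (intro sum.cong refl assms)
  also have "\<dots> = (\<Sum>a<d. \<Sum>b<d. \<Sum>c<d. f ((a + k1) mod d) ((b + k2) mod d) c)"
    by (intro sum.cong refl sum_lessThan_mod_shift)
  also have "\<dots> = (\<Sum>a<d. \<Sum>b<d. \<Sum>c<d. f ((a + k1) mod d) b c)"
    by (intro sum.cong refl sum_lessThan_mod_shift[of "\<lambda>b. \<Sum>c<d. f ((_ + k1) mod d) b c"])
  also have "\<dots> = (\<Sum>a<d. \<Sum>b<d. \<Sum>c<d. f a b c)"
    by (rule sum_lessThan_mod_shift[of "\<lambda>a. \<Sum>b<d. \<Sum>c<d. f a b c"])
  finally show ?thesis .
qed

lemma sum4_lessThan_swap:
  "(\<Sum>a<d. \<Sum>b<d. \<Sum>c<d. \<Sum>s<(e::nat). g a b c s) = (\<Sum>s<e. \<Sum>a<(d::nat). \<Sum>b<d. \<Sum>c<d. g a b c s)"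
  by (simp add: sum.swap[of _ "{..<e}"])

lemma mod_diff_add_diff:
  assumes "s < d" "t < (d::nat)"
  shows "((d - s) + (d - t)) mod d = (d - (s + t) mod d) mod d"
proof (cases "s + t < d")
  case True
  have e: "(d - s) + (d - t) = d + (d - (s + t))" using assms True by simp
  have h: "(s + t) mod d = s + t" using True by simp
  show ?thesis unfolding e h mod_add_self1 ..
next
  case False
  then have "(s + t) mod d = s + t - d" using assms by (simp add: mod_if le_mod_geq)
  with False assms show ?thesis by (simp add: mod_if)
qed

definition t_word :: "gen list \<Rightarrow> bool" where
  "t_word v \<longleftrightarrow> (\<forall>g\<in>set v. \<exists>i. 1 \<le> i \<and> g = T i)"

lemma t_word_simps [simp]:
  "t_word []"
  "t_word (g # v) \<longleftrightarrow> (\<exists>i. 1 \<le> i \<and> g = T i) \<and> t_word v"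
  "t_word (v @ w) \<longleftrightarrow> t_word v \<and> t_word w"
  "t_word (replicate k (T i)) \<longleftrightarrow> k = 0 \<or> 1 \<le> i"
  by (auto simp: t_word_def)

lemma t_word_imp_valid_word: "t_word v \<Longrightarrow> valid_word v"
  by (auto simp: t_word_def valid_word_def)

definition e_word :: "nat \<Rightarrow> nat \<Rightarrow> nat \<Rightarrow> gen list" where
  "e_word d i s = replicate s (T i) @ replicate (d - s) (T (Suc i))"

lemma e_word_valid_word: "1 \<le> i \<Longrightarrow> valid_word (e_word d i s)"
  by (simp add: e_word_def)

lemma e_word_words: "1 \<le> i \<Longrightarrow> Suc i \<le> n \<Longrightarrow> e_word d i s \<in> words n"
  by (auto simp: e_word_def)

lemma G_notin_e_word [simp]: "G N \<notin> set (e_word d i s)"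
  by (simp add: e_word_def)

lemma ftr_ee: "ftr f (ee d m i) = 1 / of_nat d * (\<Sum>s<d. f (replicate (m + s) (T i) @ replicate (d - s) (T (Suc i))))"
  by (simp add: ee_def ftr_map sum_list_map_upt_0 sum_distrib_left)

lemma ftr_ee_wd: "ftr f (fmul (ee d m i) (wd w)) = 1 / of_nat d * (\<Sum>s<d. f (replicate (m + s) (T i) @ replicate (d - s) (T (Suc i)) @ w))"
  by (simp add: ee_def ftr_fmul ftr_map sum_list_map_upt_0 sum_distrib_left)

text \<open>The action of \<open>g_i\<close> on the \<open>t\<close>'s by conjugation: \<open>g_i t_j = t_{s_i(j)} g_i\<close>.\<close>
definition s_act :: "nat \<Rightarrow> gen \<Rightarrow> gen" where
  "s_act i g = (case g of T j \<Rightarrow> T (transpose i (Suc i) j) | G j \<Rightarrow> G j)"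

lemma s_act_T [simp]: "s_act i (T j) = T (transpose i (Suc i) j)"
  by (simp add: s_act_def)

lemma transpose_Suc_ge_1: "1 \<le> i \<Longrightarrow> 1 \<le> j \<Longrightarrow> 1 \<le> transpose i (Suc i) j"
  by (auto simp: transpose_def)

definition t_mono :: "nat \<Rightarrow> nat \<Rightarrow> nat \<Rightarrow> nat \<Rightarrow> gen list" where
  "t_mono i a b c = replicate a (T i) @ replicate b (T (Suc i)) @ replicate c (T (Suc (Suc i)))"

lemma t_word_t_mono: "1 \<le> i \<Longrightarrow> t_word (t_mono i a b c)"
  by (simp add: t_mono_def)
lemma valid_word_t_mono: "1 \<le> i \<Longrightarrow> valid_word (t_mono i a b c)"
  by (simp add: t_mono_def)
lemma t_mono_words: "1 \<le> i \<Longrightarrow> Suc (Suc i) \<le> n \<Longrightarrow> t_mono i a b c \<in> words n"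
  by (simp add: t_mono_def)

abbreviation t_pow :: "nat \<Rightarrow> nat \<Rightarrow> gen list" where
  "t_pow j k \<equiv> replicate k (T j)"

lemma t_mono_1: "t_mono 1 a b c = t_pow 1 a @ t_pow 2 b @ t_pow 3 c"
  by (simp add: t_mono_def numeral_2_eq_2 numeral_3_eq_3)

definition reduced_words :: "nat \<Rightarrow> gen list set" where
  "reduced_words N = {v \<in> words (Suc N). count_list v (G N) \<le> 1}"

section \<open>The defining relations under the trace\<close>

locale yh_trace =
  fixes d :: nat and u z :: complex and x :: "nat \<Rightarrow> complex" and tr :: "gen list \<Rightarrow> complex"
  assumes markov: "markov_trace d u z x tr" and d_pos: "1 \<le> d" and x_0: "x 0 = 1" and u_nonzero: "u \<noteq> 0"
begin

lemma tr_relation_in_context: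
  "r \<in> yh_rels d u \<Longrightarrow> valid_word a \<Longrightarrow> valid_word b \<Longrightarrow> ftr (\<lambda>w. tr (a @ w @ b)) r = 0"
  using markov unfolding markov_trace_def by (metis ftr_in_context)

lemma tr_commute: "valid_word a \<Longrightarrow> valid_word b \<Longrightarrow> tr (a @ b) = tr (b @ a)"
  using markov unfolding markov_trace_def by blast

lemma tr_Nil: "tr [] = 1"
  using markov unfolding markov_trace_def by blast

lemma tr_markov_G: "1 \<le> n \<Longrightarrow> a \<in> words n \<Longrightarrow> tr (a @ [G n]) = z * tr a"
  using markov unfolding markov_trace_def by blast

lemma tr_markov_T: "a \<in> words n \<Longrightarrow> 1 \<le> s \<Longrightarrow> s < d \<Longrightarrow> tr (a @ replicate s (T (Suc n))) = x s * tr a"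
  using markov unfolding markov_trace_def by blast

text \<open>Equality modulo the kernel of the bilinear form \<open>(a, b) \<mapsto> tr (a b)\<close>; every defining
  relation of \<open>Y_{d,n}(u)\<close> between two words holds in this sense.\<close>
definition tr_eq :: "gen list \<Rightarrow> gen list \<Rightarrow> bool" where
  "tr_eq v w \<longleftrightarrow> (\<forall>a b. valid_word a \<longrightarrow> valid_word b \<longrightarrow> tr (a @ v @ b) = tr (a @ w @ b))"

lemma tr_eq_refl [simp]: "tr_eq v v"
  by (simp add: tr_eq_def)
lemma tr_eq_sym: "tr_eq v w \<Longrightarrow> tr_eq w v"
  by (simp add: tr_eq_def)
lemma tr_eq_trans [trans]: "tr_eq v w \<Longrightarrow> tr_eq w y \<Longrightarrow> tr_eq v y"
  by (simp add: tr_eq_def)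
lemma tr_eqD: "tr_eq v w \<Longrightarrow> valid_word a \<Longrightarrow> valid_word b \<Longrightarrow> tr (a @ v @ b) = tr (a @ w @ b)"
  by (simp add: tr_eq_def)
lemma tr_eq_imp_eq: "tr_eq v w \<Longrightarrow> tr v = tr w"
  using tr_eqD[of v w "[]" "[]"] by simp

lemma tr_eq_context: "tr_eq v w \<Longrightarrow> valid_word p \<Longrightarrow> valid_word q \<Longrightarrow> tr_eq (p @ v @ q) (p @ w @ q)"
  unfolding tr_eq_def by (metis append.assoc valid_word_append)
lemma tr_eq_append_left: "tr_eq v w \<Longrightarrow> valid_word p \<Longrightarrow> tr_eq (p @ v) (p @ w)"
  using tr_eq_context[of v w p "[]"] by simp
lemma tr_eq_append_right: "tr_eq v w \<Longrightarrow> valid_word q \<Longrightarrow> tr_eq (v @ q) (w @ q)"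
  using tr_eq_context[of v w "[]" q] by simp
lemma tr_eq_Cons: "tr_eq v w \<Longrightarrow> valid_word [g] \<Longrightarrow> tr_eq (g # v) (g # w)"
  using tr_eq_context[of v w "[g]" "[]"] by simp

lemma tr_eq_if_relation: "fminus (wd v) (wd w) \<in> yh_rels d u \<Longrightarrow> tr_eq v w"
  unfolding tr_eq_def using tr_relation_in_context by fastforce

lemma tr_eq_G_G_far: "1 \<le> i \<Longrightarrow> 1 \<le> j \<Longrightarrow> i + 1 < j \<or> j + 1 < i \<Longrightarrow> tr_eq [G i, G j] [G j, G i]"
  by (rule tr_eq_if_relation) (auto simp: yh_rels_def)
lemma tr_eq_braid: "1 \<le> i \<Longrightarrow> tr_eq [G (Suc i), G i, G (Suc i)] [G i, G (Suc i), G i]"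
  by (rule tr_eq_if_relation) (auto simp: yh_rels_def)
lemma tr_eq_T_T: "1 \<le> i \<Longrightarrow> 1 \<le> j \<Longrightarrow> tr_eq [T i, T j] [T j, T i]"
  by (rule tr_eq_if_relation) (auto simp: yh_rels_def)
lemma tr_eq_G_T: "1 \<le> i \<Longrightarrow> 1 \<le> j \<Longrightarrow> tr_eq [G i, T j] [T (transpose i (Suc i) j), G i]"
  by (rule tr_eq_if_relation) (auto simp: yh_rels_def transpose_def)

lemma tr_eq_T_power_d: "1 \<le> i \<Longrightarrow> tr_eq (replicate d (T i)) []"
proof -
  assume "1 \<le> i"
  then have "fminus (wd (replicate d (T i))) one \<in> yh_rels d u"
    unfolding yh_rels_def by blast
  then show ?thesis
    unfolding tr_eq_def using tr_relation_in_context by fastforce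
qed

lemma tr_quadratic:
  assumes "1 \<le> i" "valid_word p" "valid_word q"
  shows "tr (p @ G i # G i # q) = tr (p @ q)
     + (u - 1) * (1 / of_nat d * (\<Sum>s<d. tr (p @ e_word d i s @ q)))
     + (u - 1) * (1 / of_nat d * (\<Sum>s<d. tr (p @ e_word d i s @ G i # q)))"
proof -
  let ?r = "fminus (wd [G i, G i]) (one @ fscale (u - 1) (ee d 0 i) @ fscale (u - 1) (fmul (ee d 0 i) (wd [G i])))"
  have "?r \<in> yh_rels d u"
    unfolding yh_rels_def using assms(1) by blast
  from tr_relation_in_context[OF this assms(2,3)] show ?thesis
    by (simp add: ftr_ee ftr_ee_wd e_word_def)
qed

section \<open>Words in the \<open>t_i\<close>\<close>

lemma tr_eq_T_rotate: "t_word v \<Longrightarrow> 1 \<le> i \<Longrightarrow> tr_eq (T i # v) (v @ [T i])"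
proof (induct v)
  case (Cons g v)
  then obtain j where j: "1 \<le> j" "g = T j" "t_word v" by auto
  have "tr_eq (T i # T j # v) (T j # T i # v)"
    using tr_eq_append_right[OF tr_eq_T_T[of i j], of v] j Cons t_word_imp_valid_word by auto
  also have "tr_eq \<dots> (T j # v @ [T i])"
    using tr_eq_Cons[OF Cons(1)] j Cons by auto
  finally show ?case using j by simp
qed simp

lemma tr_eq_t_word_perm: "t_word v \<Longrightarrow> mset v = mset w \<Longrightarrow> tr_eq v w"
proof (induct v arbitrary: w)
  case (Cons g v)
  then obtain i where i: "1 \<le> i" "g = T i" "t_word v" by auto
  have "g \<in> set w" using Cons(3) by (metis list.set_intros(1) set_mset_mset)
  then obtain w1 w2 where w: "w = w1 @ g # w2" by (meson split_list)
  have "t_word w" using Cons(2,3) unfolding t_word_def by (metis set_mset_mset)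
  then have tw: "t_word w1" "t_word w2" using w by auto
  have "mset v = mset (w1 @ w2)" using Cons(3) w by simp
  then have "tr_eq (g # v) (g # w1 @ w2)" using Cons(1) tr_eq_Cons i by auto
  also have "tr_eq (g # w1 @ w2) (w1 @ g # w2)"
    using tr_eq_append_right[OF tr_eq_T_rotate[OF tw(1) i(1)], of w2] tw t_word_imp_valid_word i(2)
    by simp
  finally show ?case using w by simp
qed (metis mset_zero_iff mset.simps(1) tr_eq_refl)

lemma tr_eq_t_word_cancel_power_d:
  assumes "t_word v" and "d \<le> count (mset v) (T i)"
  obtains v' where "tr_eq v v'" "t_word v'" "length v' < length v"
    "\<And>j. count (mset v') (T j) mod d = count (mset v) (T j) mod d"
proof
  let ?c = "count (mset v) (T i)"
  define v' where "v' = filter (\<lambda>g. g \<noteq> T i) v @ replicate (?c - d) (T i)"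
  have "T i \<in> set v" using assms(2) d_pos by (metis count_mset_0_iff not_one_le_zero le_trans)
  then have i1: "1 \<le> i" using assms(1) unfolding t_word_def by auto
  have ms: "mset v = mset (replicate d (T i) @ v')"
    by (rule multiset_eqI) (use assms(2) in \<open>auto simp: v'_def mset_filter\<close>)
  show tv': "t_word v'" using assms(1) i1 unfolding v'_def t_word_def by auto
  have "tr_eq v (replicate d (T i) @ v')" using tr_eq_t_word_perm[OF assms(1) ms] .
  also have "tr_eq \<dots> v'"
    using tr_eq_append_right[OF tr_eq_T_power_d[OF i1], of v'] tv' t_word_imp_valid_word by simp
  finally show "tr_eq v v'" .
  show "length v' < length v" using d_pos size_mset[of v] ms by simp
  show "count (mset v') (T j) mod d = count (mset v) (T j) mod d" for j
    using ms by (simp add: count_replicate_mset)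
qed

lemma tr_eq_t_word_mod:
  assumes "t_word v" "t_word w" "\<And>i. count (mset v) (T i) mod d = count (mset w) (T i) mod d"
  shows "tr_eq v w"
  using assms
proof (induct "length v + length w" arbitrary: v w rule: less_induct)
  case less
  show ?case
  proof (cases "\<exists>i. d \<le> count (mset v) (T i) \<or> d \<le> count (mset w) (T i)")
    case True
    then obtain i where "d \<le> count (mset v) (T i) \<or> d \<le> count (mset w) (T i)" by blast
    then show ?thesis
    proof
      assume c: "d \<le> count (mset v) (T i)"
      obtain v' where "tr_eq v v'" "t_word v'" "length v' < length v"
        "\<And>j. count (mset v') (T j) mod d = count (mset v) (T j) mod d"
        using tr_eq_t_word_cancel_power_d[OF less.prems(1) c] by blast
      with less show ?thesis by (metis add_less_mono1 tr_eq_trans)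
    next
      assume c: "d \<le> count (mset w) (T i)"
      obtain w' where "tr_eq w w'" "t_word w'" "length w' < length w"
        "\<And>j. count (mset w') (T j) mod d = count (mset w) (T j) mod d"
        using tr_eq_t_word_cancel_power_d[OF less.prems(2) c] by blast
      with less show ?thesis by (metis add_less_mono tr_eq_trans tr_eq_sym le_refl nat_add_left_cancel_less)
    qed
  next
    case False
    have "mset v = mset w"
    proof (rule multiset_eqI)
      fix g
      show "count (mset v) g = count (mset w) g"
      proof (cases g)
        case (T i)
        then show ?thesis using less.prems(3)[of i] False by (metis mod_less not_le)
      next
        case (G i)
        then have "g \<notin> set v" "g \<notin> set w" using less.prems(1,2) unfolding t_word_def by auto
        then show ?thesis by (metis count_mset_0_iff)
      qed
    qed
    then show ?thesis using tr_eq_t_word_perm less.prems(1) by blast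
  qed
qed

lemma tr_markov_T_power: "a \<in> words n \<Longrightarrow> tr (a @ replicate k (T (Suc n))) = x (k mod d) * tr a"
proof -
  assume a: "a \<in> words n"
  have "tr_eq (replicate k (T (Suc n))) (replicate (k mod d) (T (Suc n)))"
    by (rule tr_eq_t_word_mod) auto
  then have "tr (a @ replicate k (T (Suc n))) = tr (a @ replicate (k mod d) (T (Suc n)))"
    using tr_eqD[of _ _ a "[]"] words_imp_valid_word[OF a] by simp
  also have "\<dots> = x (k mod d) * tr a"
    using tr_markov_T[OF a, of "k mod d"] d_pos x_0 by (cases "k mod d = 0") simp_all
  finally show ?thesis .
qed

section \<open>Moving generators past words\<close>

lemma tr_eq_G_t_word: "t_word v \<Longrightarrow> 1 \<le> i \<Longrightarrow> tr_eq (G i # v) (map (s_act i) v @ [G i])"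
proof (induct v)
  case (Cons g v)
  then obtain j where j: "1 \<le> j" "g = T j" "t_word v" by auto
  have "tr_eq ([G i, T j] @ v) ([T (transpose i (Suc i) j), G i] @ v)"
    by (rule tr_eq_append_right[OF tr_eq_G_T]) (use j Cons t_word_imp_valid_word in auto)
  also have "tr_eq \<dots> (T (transpose i (Suc i) j) # (map (s_act i) v @ [G i]))"
    using tr_eq_Cons[OF Cons(1)] j Cons transpose_Suc_ge_1 by auto
  finally show ?case using j by simp
qed simp

lemma tr_eq_G_T_power:
  "1 \<le> i \<Longrightarrow> 1 \<le> j \<Longrightarrow> tr_eq (G i # replicate k (T j)) (replicate k (T (transpose i (Suc i) j)) @ [G i])"
  using tr_eq_G_t_word[of "replicate k (T j)" i] by simp

lemma tr_eq_T_power_G: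
  "1 \<le> i \<Longrightarrow> 1 \<le> j \<Longrightarrow> tr_eq (replicate k (T j) @ [G i]) (G i # replicate k (T (transpose i (Suc i) j)))"
  using tr_eq_G_T_power[of i "transpose i (Suc i) j" k] transpose_Suc_ge_1[of i j] by (simp add: tr_eq_sym)

lemma tr_eq_commute_word:
  assumes "\<And>g. g \<in> set y \<Longrightarrow> tr_eq [h, g] [g, h]" "valid_word [h]" "valid_word y"
  shows "tr_eq (h # y) (y @ [h])"
  using assms
proof (induct y)
  case (Cons g y)
  have valid: "valid_word [g]" "valid_word y"
    using Cons.prems(3) by (auto simp: valid_word_def)
  have "tr_eq ([h, g] @ y) ([g, h] @ y)"
    using Cons.prems(1) valid by (intro tr_eq_append_right) auto
  also have "tr_eq ([g, h] @ y) (g # (y @ [h]))"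
    using tr_eq_Cons[OF Cons.hyps valid(1)] Cons.prems valid by simp
  finally show ?case by simp
qed simp

lemma tr_eq_G_commute_lower:
  assumes y: "y \<in> words m" and "m < N"
  shows "tr_eq (G N # y) (y @ [G N])"
proof (rule tr_eq_commute_word)
  fix g assume g: "g \<in> set y"
  show "tr_eq [G N, g] [g, G N]"
  proof (cases g)
    case (G j)
    with y g assms(2) have "1 \<le> j" "j + 1 < N" by (auto simp: words_def dest!: bspec)
    then show ?thesis using G tr_eq_G_G_far[of N j] by simp
  next
    case (T j)
    with y g assms(2) have "1 \<le> j" "j < N" by (auto simp: words_def dest!: bspec)
    then show ?thesis using T tr_eq_G_T[of N j] by (simp add: transpose_def)
  qed
qed (use assms in \<open>auto simp: words_imp_valid_word\<close>)

lemma tr_eq_T_commute_lower: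
  assumes y: "y \<in> words m" and "m < K"
  shows "tr_eq (T K # y) (y @ [T K])"
proof (rule tr_eq_commute_word)
  fix g assume g: "g \<in> set y"
  show "tr_eq [T K, g] [g, T K]"
  proof (cases g)
    case (G j)
    with y g assms(2) have "1 \<le> j" "j + 1 < K" by (auto simp: words_def dest!: bspec)
    then show ?thesis using G tr_eq_sym[OF tr_eq_G_T[of j K]] by (simp add: transpose_def)
  next
    case (T j)
    with y g assms(2) have "1 \<le> j" "j < K" by (auto simp: words_def dest!: bspec)
    then show ?thesis using T tr_eq_T_T[of K j] by simp
  qed
qed (use assms in \<open>auto simp: words_imp_valid_word\<close>)

lemma tr_eq_T_power_commute_lower:
  "y \<in> words m \<Longrightarrow> m < K \<Longrightarrow> tr_eq (replicate k (T K) @ y) (y @ replicate k (T K))"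
proof (induct k)
  case (Suc k)
  then have "tr_eq (T K # (replicate k (T K) @ y)) (T K # (y @ replicate k (T K)))"
    by (intro tr_eq_Cons) auto
  also have "tr_eq \<dots> ((y @ [T K]) @ replicate k (T K))"
    using tr_eq_append_right[OF tr_eq_T_commute_lower[OF Suc(2,3)], of "replicate k (T K)"] Suc by simp
  finally show ?case by (simp add: replicate_app_Cons_same)
qed simp

lemma tr_eq_split_top_T:
  assumes "w \<in> words (Suc N)" "G N \<notin> set w"
  obtains w' k where "w' \<in> words N" "tr_eq w (w' @ replicate k (T (Suc N)))"
proof -
  from assms have "\<exists>w' k. w' \<in> words N \<and> tr_eq w (w' @ replicate k (T (Suc N)))"
  proof (induct w)
    case Nil
    show ?case by (metis append_Nil replicate_0 tr_eq_refl words_Nil)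
  next
    case (Cons g w)
    have "w \<in> words (Suc N)" "G N \<notin> set w"
      using Cons.prems by (auto simp: words_def)
    with Cons.hyps obtain w' k where w': "w' \<in> words N" "tr_eq w (w' @ replicate k (T (Suc N)))"
      by blast
    show ?case
    proof (cases "g = T (Suc N)")
      case True
      have "tr_eq (T (Suc N) # w) (T (Suc N) # w' @ replicate k (T (Suc N)))"
        using tr_eq_Cons[OF w'(2)] by simp
      also have "tr_eq \<dots> ((w' @ [T (Suc N)]) @ replicate k (T (Suc N)))"
        using tr_eq_append_right[OF tr_eq_T_commute_lower[OF w'(1)], of "Suc N"] by simp
      also have "(w' @ [T (Suc N)]) @ replicate k (T (Suc N)) = w' @ replicate (Suc k) (T (Suc N))"
        by (simp add: replicate_app_Cons_same)
      finally show ?thesis using True w'(1) by blast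
    next
      case False
      have g: "[g] \<in> words N"
        using Cons.prems False by (cases g) (auto simp: words_def)
      then have "tr_eq (g # w) (g # w' @ replicate k (T (Suc N)))"
        by (intro tr_eq_Cons[OF w'(2)]) (simp add: words_imp_valid_word)
      moreover have "g # w' \<in> words N"
        using g w'(1) by (simp add: words_def)
      ultimately show ?thesis by fastforce
    qed
  qed
  with that show ?thesis by blast
qed

section \<open>The spanning argument\<close>

definition tr_expands :: "gen list \<Rightarrow> fsum \<Rightarrow> bool" where
  "tr_expands w P \<longleftrightarrow>
     (\<forall>a b. valid_word a \<longrightarrow> valid_word b \<longrightarrow> tr (a @ w @ b) = ftr (\<lambda>v. tr (a @ v @ b)) P)"

definition tr_spanned :: "gen list set \<Rightarrow> gen list \<Rightarrow> bool" where
  "tr_spanned S w \<longleftrightarrow> (\<exists>P. snd ` set P \<subseteq> S \<and> tr_expands w P)"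

lemma tr_spanned_if_mem: "w \<in> S \<Longrightarrow> tr_spanned S w"
  unfolding tr_spanned_def tr_expands_def by (intro exI[of _ "[(1, w)]"]) simp

lemma tr_spanned_tr_eq: "tr_eq w w' \<Longrightarrow> tr_spanned S w' \<Longrightarrow> tr_spanned S w"
  by (auto simp: tr_spanned_def tr_expands_def tr_eq_def)

lemma tr_expands_context:
  assumes "tr_expands w P" "valid_word p" "valid_word q"
  shows "tr_expands (p @ w @ q) (map (\<lambda>c. (fst c, p @ snd c @ q)) P)"
  unfolding tr_expands_def
proof (intro allI impI)
  fix a b assume "valid_word a" "valid_word b"
  then have "tr ((a @ p) @ w @ (q @ b)) = ftr (\<lambda>v. tr ((a @ p) @ v @ (q @ b))) P"
    using assms unfolding tr_expands_def by (metis valid_word_append)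
  then show "tr (a @ (p @ w @ q) @ b) = ftr (\<lambda>v. tr (a @ v @ b)) (map (\<lambda>c. (fst c, p @ snd c @ q)) P)"
    by (simp add: ftr_map ftr_def comp_def)
qed

lemma tr_expands_concat:
  assumes "tr_expands w P" "\<And>c. c \<in> set P \<Longrightarrow> tr_expands (snd c) (Q c)"
  shows "tr_expands w (concat (map (\<lambda>c. fscale (fst c) (Q c)) P))"
  unfolding tr_expands_def
proof (intro allI impI)
  fix a b assume ab: "valid_word a" "valid_word b"
  have "tr (a @ w @ b) = (\<Sum>c\<leftarrow>P. fst c * tr (a @ snd c @ b))"
    using assms(1) ab unfolding tr_expands_def ftr_def by simp
  also have "\<dots> = (\<Sum>c\<leftarrow>P. fst c * ftr (\<lambda>v. tr (a @ v @ b)) (Q c))"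
    using assms(2) ab by (intro arg_cong[where f=sum_list] map_cong) (auto simp: tr_expands_def)
  also have "\<dots> = ftr (\<lambda>v. tr (a @ v @ b)) (concat (map (\<lambda>c. fscale (fst c) (Q c)) P))"
    by (simp add: ftr_concat comp_def)
  finally show "tr (a @ w @ b) = \<dots>" .
qed

lemma tr_spanned_if_expands:
  assumes "tr_expands w P" "\<And>c. c \<in> set P \<Longrightarrow> tr_spanned S (snd c)"
  shows "tr_spanned S w"
proof -
  have "\<forall>c\<in>set P. \<exists>Q. snd ` set Q \<subseteq> S \<and> tr_expands (snd c) Q"
    using assms(2) unfolding tr_spanned_def by blast
  then obtain Q where Q: "\<forall>c\<in>set P. snd ` set (Q c) \<subseteq> S \<and> tr_expands (snd c) (Q c)"
    by (metis bchoice)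
  have "snd ` set (concat (map (\<lambda>c. fscale (fst c) (Q c)) P)) = (\<Union>c\<in>set P. snd ` set (Q c))"
    by (simp add: image_UN)
  then have "snd ` set (concat (map (\<lambda>c. fscale (fst c) (Q c)) P)) \<subseteq> S"
    using Q by (simp add: UN_subset_iff)
  with tr_expands_concat[OF assms(1)] Q show ?thesis
    unfolding tr_spanned_def by blast
qed

lemma tr_spanned_context:
  assumes "tr_spanned S w" "valid_word p" "valid_word q"
    and "\<And>v. v \<in> S \<Longrightarrow> tr_spanned S' (p @ v @ q)"
  shows "tr_spanned S' (p @ w @ q)"
proof -
  from assms(1) obtain P where P: "snd ` set P \<subseteq> S" "tr_expands w P"
    unfolding tr_spanned_def by blast
  show ?thesis
  proof (rule tr_spanned_if_expands[OF tr_expands_context[OF P(2) assms(2,3)]])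
    fix c assume "c \<in> set (map (\<lambda>c. (fst c, p @ snd c @ q)) P)"
    then obtain c' where "c' \<in> set P" "snd c = p @ snd c' @ q" by auto
    with P(1) assms(4) show "tr_spanned S' (snd c)" by auto
  qed
qed

lemma tr_expands_quadratic:
  assumes "1 \<le> i" "valid_word p"
  shows "tr_expands (p @ [G i, G i]) ([(1, p)] @ map (\<lambda>s. ((u - 1) / of_nat d, p @ e_word d i s)) [0..<d]
           @ map (\<lambda>s. ((u - 1) / of_nat d, p @ e_word d i s @ [G i])) [0..<d])"
  unfolding tr_expands_def
proof (intro allI impI)
  fix a b assume "valid_word a" "valid_word b"
  with assms have "tr ((a @ p) @ G i # G i # b) = tr ((a @ p) @ b)
     + (u - 1) * (1 / of_nat d * (\<Sum>s<d. tr ((a @ p) @ e_word d i s @ b)))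
     + (u - 1) * (1 / of_nat d * (\<Sum>s<d. tr ((a @ p) @ e_word d i s @ G i # b)))"
    by (intro tr_quadratic) auto
  then show "tr (a @ (p @ [G i, G i]) @ b) = ftr (\<lambda>v. tr (a @ v @ b)) (
           [(1, p)] @ map (\<lambda>s. ((u - 1) / of_nat d, p @ e_word d i s)) [0..<d]
           @ map (\<lambda>s. ((u - 1) / of_nat d, p @ e_word d i s @ [G i])) [0..<d])"
    by (simp add: ftr_map sum_list_map_upt_0 sum_distrib_left)
qed

lemma tr_spanned_G_conj_no_G:
  assumes v: "v \<in> words (Suc m)" and "G m \<notin> set v"
  shows "tr_spanned (reduced_words (Suc m)) (G (Suc m) # v @ [G (Suc m)])"
proof -
  define N where "N = Suc m"
  obtain v' l where v': "v' \<in> words m" "tr_eq v (v' @ replicate l (T N))"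
    using tr_eq_split_top_T[OF assms] unfolding N_def by blast
  have "tr_eq (G N # v @ [G N]) (G N # (v' @ replicate l (T N)) @ [G N])"
    using tr_eq_context[OF v'(2), of "[G N]" "[G N]"] by (simp add: N_def)
  also have "tr_eq \<dots> (v' @ G N # replicate l (T N) @ [G N])"
    using tr_eq_append_right[OF tr_eq_G_commute_lower[OF v'(1)], of N "replicate l (T N) @ [G N]"]
    by (simp add: N_def)
  also have "tr_eq \<dots> ((v' @ replicate l (T (Suc N))) @ [G N, G N])"
    using tr_eq_context[OF tr_eq_G_T_power[of N N l], of v' "[G N]"] v'(1)
    by (simp add: N_def words_imp_valid_word)
  finally have eq: "tr_eq (G N # v @ [G N]) ((v' @ replicate l (T (Suc N))) @ [G N, G N])" .
  let ?p = "v' @ replicate l (T (Suc N))"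
  have p: "?p \<in> words (Suc N)" "G N \<notin> set ?p" "valid_word ?p"
    using words_mono[OF v'(1), of "Suc N"] G_notin_words[OF v'(1), of N] words_imp_valid_word[OF v'(1)]
    by (auto simp: N_def)
  have "tr_spanned (reduced_words N) (?p @ [G N, G N])"
  proof (rule tr_spanned_if_expands[OF tr_expands_quadratic[OF _ p(3)]])
    fix c assume "c \<in> set ([(1, ?p)] @ map (\<lambda>s. ((u - 1) / of_nat d, ?p @ e_word d N s)) [0..<d]
           @ map (\<lambda>s. ((u - 1) / of_nat d, ?p @ e_word d N s @ [G N])) [0..<d])"
    then have "snd c \<in> reduced_words N"
      using p e_word_words[of N "Suc N"] by (auto simp: reduced_words_def N_def)
    then show "tr_spanned (reduced_words N) (snd c)"
      by (rule tr_spanned_if_mem)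
  qed (simp add: N_def)
  with eq show ?thesis
    unfolding N_def by (rule tr_spanned_tr_eq)
qed

lemma tr_eq_G_conj_one_G:
  assumes \<rho>': "\<rho>' \<in> words m" and \<sigma>': "\<sigma>' \<in> words m" and m: "1 \<le> m"
  defines "N \<equiv> Suc m"
  shows "tr_eq (G N # (\<rho>' @ replicate a (T N)) @ G m # (\<sigma>' @ replicate b (T N)) @ [G N])
    (\<rho>' @ replicate a (T (Suc N)) @ G m # G N # G m # \<sigma>' @ replicate b (T (Suc N)))"
proof -
  have valid: "valid_word \<rho>'" "valid_word \<sigma>'"
    using \<rho>' \<sigma>' words_imp_valid_word by blast+
  note N = N_def m
  have "tr_eq (G N # (\<rho>' @ replicate a (T N)) @ G m # (\<sigma>' @ replicate b (T N)) @ [G N])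
      (\<rho>' @ G N # replicate a (T N) @ G m # \<sigma>' @ replicate b (T N) @ [G N])"
    using tr_eq_append_right[OF tr_eq_G_commute_lower[OF \<rho>'],
        of N "replicate a (T N) @ G m # \<sigma>' @ replicate b (T N) @ [G N]"] N valid by simp
  also have "tr_eq \<dots> (\<rho>' @ replicate a (T (Suc N)) @ G N # G m # \<sigma>' @ replicate b (T N) @ [G N])"
    using tr_eq_context[OF tr_eq_G_T_power[of N N a], of \<rho>' "G m # \<sigma>' @ replicate b (T N) @ [G N]"]
      N valid by simp
  also have "tr_eq \<dots> (\<rho>' @ replicate a (T (Suc N)) @ G N # G m # \<sigma>' @ G N # replicate b (T (Suc N)))"
    using tr_eq_context[OF tr_eq_T_power_G[of N N b], of "\<rho>' @ replicate a (T (Suc N)) @ G N # G m # \<sigma>'" "[]"]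
      N valid by simp
  also have "tr_eq \<dots> (\<rho>' @ replicate a (T (Suc N)) @ G N # G m # G N # \<sigma>' @ replicate b (T (Suc N)))"
    using tr_eq_context[OF tr_eq_sym[OF tr_eq_G_commute_lower[OF \<sigma>']],
        of N "\<rho>' @ replicate a (T (Suc N)) @ [G N, G m]" "replicate b (T (Suc N))"] N valid by simp
  also have "tr_eq \<dots> (\<rho>' @ replicate a (T (Suc N)) @ G m # G N # G m # \<sigma>' @ replicate b (T (Suc N)))"
    using tr_eq_context[OF tr_eq_braid[OF m], of "\<rho>' @ replicate a (T (Suc N))" "\<sigma>' @ replicate b (T (Suc N))"]
      N valid by simp
  finally show ?thesis .
qed

lemma tr_spanned_G_conj_one_G:
  assumes v: "v \<in> words (Suc m)" and "count_list v (G m) = 1"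
  shows "tr_spanned (reduced_words (Suc m)) (G (Suc m) # v @ [G (Suc m)])"
proof -
  define N where "N = Suc m"
  obtain \<rho> \<sigma> where v_eq: "v = \<rho> @ G m # \<sigma>" and "G m \<notin> set \<rho>" "count_list \<sigma> (G m) = 0"
    using count_list_Suc_split_first[of v "G m" 0] assms(2) by auto
  then have \<rho>\<sigma>: "\<rho> \<in> words (Suc m)" "G m \<notin> set \<rho>" "\<sigma> \<in> words (Suc m)" "G m \<notin> set \<sigma>"
    using v by (auto simp: count_list_0_iff)
  have m: "1 \<le> m" using v v_eq by simp
  obtain \<rho>' a where \<rho>': "\<rho>' \<in> words m" "tr_eq \<rho> (\<rho>' @ replicate a (T N))"
    using tr_eq_split_top_T[OF \<rho>\<sigma>(1,2)] unfolding N_def by blast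
  obtain \<sigma>' b where \<sigma>': "\<sigma>' \<in> words m" "tr_eq \<sigma> (\<sigma>' @ replicate b (T N))"
    using tr_eq_split_top_T[OF \<rho>\<sigma>(3,4)] unfolding N_def by blast
  have valid: "valid_word \<rho>'" "valid_word \<sigma>'" "valid_word \<sigma>"
    using \<rho>'(1) \<sigma>'(1) \<rho>\<sigma>(3) words_imp_valid_word by blast+
  have "tr_eq (G N # v @ [G N]) (G N # (\<rho>' @ replicate a (T N)) @ G m # \<sigma> @ [G N])"
    using tr_eq_context[OF \<rho>'(2), of "[G N]" "G m # \<sigma> @ [G N]"] N_def m valid v_eq by simp
  also have "tr_eq \<dots> (G N # (\<rho>' @ replicate a (T N)) @ G m # (\<sigma>' @ replicate b (T N)) @ [G N])"
    using tr_eq_context[OF \<sigma>'(2), of "G N # (\<rho>' @ replicate a (T N)) @ [G m]" "[G N]"] N_def m valid by simp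
  also have "tr_eq \<dots> (\<rho>' @ replicate a (T (Suc N)) @ G m # G N # G m # \<sigma>' @ replicate b (T (Suc N)))"
    using tr_eq_G_conj_one_G[OF \<rho>'(1) \<sigma>'(1) m] unfolding N_def .
  finally have eq: "tr_eq (G N # v @ [G N])
      (\<rho>' @ replicate a (T (Suc N)) @ G m # G N # G m # \<sigma>' @ replicate b (T (Suc N)))" .
  have "\<rho>' @ replicate a (T (Suc N)) @ G m # G N # G m # \<sigma>' @ replicate b (T (Suc N)) \<in> reduced_words N"
    using words_mono[OF \<rho>'(1), of "Suc N"] words_mono[OF \<sigma>'(1), of "Suc N"]
      G_notin_words[OF \<rho>'(1), of N] G_notin_words[OF \<sigma>'(1), of N] N_def m
    by (simp add: reduced_words_def)
  with eq show ?thesis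
    unfolding N_def by (blast intro: tr_spanned_tr_eq tr_spanned_if_mem)
qed

lemma tr_spanned_G_conj_reduced:
  assumes "v \<in> reduced_words m"
  shows "tr_spanned (reduced_words (Suc m)) (G (Suc m) # v @ [G (Suc m)])"
proof (cases "count_list v (G m) = 0")
  case True
  with assms show ?thesis
    by (intro tr_spanned_G_conj_no_G) (auto simp: reduced_words_def count_list_0_iff)
next
  case False
  with assms show ?thesis
    by (intro tr_spanned_G_conj_one_G) (auto simp: reduced_words_def)
qed

lemma tr_spanned_G_conj_split:
  assumes IH: "\<And>w. w \<in> words (Suc m) \<Longrightarrow> tr_spanned (reduced_words m) w"
    and "\<beta> \<in> words (Suc (Suc m))" "G (Suc m) \<notin> set \<beta>"
  obtains \<beta>' l where "tr_eq (G (Suc m) # \<beta> @ [G (Suc m)]) ((G (Suc m) # \<beta>' @ [G (Suc m)]) @ replicate l (T (Suc m)))"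
    "tr_spanned (reduced_words (Suc m)) (G (Suc m) # \<beta>' @ [G (Suc m)])"
proof -
  define N where "N = Suc m"
  obtain \<beta>' l where \<beta>': "\<beta>' \<in> words N" "tr_eq \<beta> (\<beta>' @ replicate l (T (Suc N)))"
    using tr_eq_split_top_T[OF assms(2,3)] unfolding N_def by blast
  have "tr_eq (G N # \<beta> @ [G N]) (G N # (\<beta>' @ replicate l (T (Suc N))) @ [G N])"
    using tr_eq_context[OF \<beta>'(2), of "[G N]" "[G N]"] by (simp add: N_def)
  also have "tr_eq \<dots> ((G N # \<beta>' @ [G N]) @ replicate l (T N))"
    using tr_eq_context[OF tr_eq_T_power_G[of N "Suc N" l], of "G N # \<beta>'" "[]"] words_imp_valid_word[OF \<beta>'(1)]
    by (simp add: N_def)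
  finally have "tr_eq (G N # \<beta> @ [G N]) ((G N # \<beta>' @ [G N]) @ replicate l (T N))" .
  moreover have "tr_spanned (reduced_words N) ([G N] @ \<beta>' @ [G N])"
    by (rule tr_spanned_context[OF IH]) (use \<beta>'(1) tr_spanned_G_conj_reduced in \<open>simp_all add: N_def\<close>)
  ultimately show ?thesis
    using that unfolding N_def by simp
qed

text \<open>The inductive step of the spanning argument: occurrences of \<open>g_N\<close> are removed in
  pairs, since \<open>g_N y g_N\<close> with \<open>y\<close> in \<open>Y_{d,N}\<close> is spanned by words with a single \<open>g_N\<close>.\<close>
lemma tr_spanned_reduced_words_Suc:
  assumes IH: "\<And>w. w \<in> words (Suc m) \<Longrightarrow> tr_spanned (reduced_words m) w"
    and w: "w \<in> words (Suc (Suc m))"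
  shows "tr_spanned (reduced_words (Suc m)) w"
  using w
proof (induct "count_list w (G (Suc m))" arbitrary: w rule: less_induct)
  case less
  define N where "N = Suc m"
  show ?case
  proof (cases "count_list w (G N) \<le> 1")
    case True
    with less.prems show ?thesis
      by (intro tr_spanned_if_mem) (simp add: reduced_words_def N_def)
  next
    case False
    define k where "k = count_list w (G N) - 2"
    have k: "count_list w (G N) = Suc (Suc k)"
      using False unfolding k_def by arith
    obtain \<alpha> w1 where \<alpha>: "w = \<alpha> @ G N # w1" "G N \<notin> set \<alpha>" "count_list w1 (G N) = Suc k"
      using count_list_Suc_split_first[OF k] by blast
    obtain \<beta> \<gamma> where \<beta>: "w1 = \<beta> @ G N # \<gamma>" "G N \<notin> set \<beta>" "count_list \<gamma> (G N) = k"
      using count_list_Suc_split_first[OF \<alpha>(3)] by blast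
    have w_eq: "w = \<alpha> @ G N # \<beta> @ G N # \<gamma>"
      using \<alpha>(1) \<beta>(1) by simp
    have parts: "\<alpha> \<in> words (Suc N)" "\<beta> \<in> words (Suc N)" "\<gamma> \<in> words (Suc N)"
      using less.prems unfolding w_eq N_def by simp_all
    have valid: "valid_word \<alpha>" "valid_word \<gamma>"
      using parts words_imp_valid_word by blast+
    obtain \<beta>' l where \<beta>': "tr_eq (G N # \<beta> @ [G N]) ((G N # \<beta>' @ [G N]) @ replicate l (T N))"
      "tr_spanned (reduced_words N) (G N # \<beta>' @ [G N])"
      using tr_spanned_G_conj_split[OF IH parts(2)[unfolded N_def] \<beta>(2)[unfolded N_def]]
      unfolding N_def by blast
    have eq: "tr_eq w (\<alpha> @ (G N # \<beta>' @ [G N]) @ (replicate l (T N) @ \<gamma>))"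
      using tr_eq_context[OF \<beta>'(1) valid] w_eq by simp
    have "tr_spanned (reduced_words N) (\<alpha> @ (G N # \<beta>' @ [G N]) @ (replicate l (T N) @ \<gamma>))"
    proof (rule tr_spanned_context[OF \<beta>'(2) valid(1)])
      fix v assume v: "v \<in> reduced_words N"
      have "count_list (\<alpha> @ v @ replicate l (T N) @ \<gamma>) (G N) < count_list w (G N)"
        using v k \<alpha>(2) \<beta>(3) by (simp add: reduced_words_def)
      moreover have "\<alpha> @ v @ replicate l (T N) @ \<gamma> \<in> words (Suc (Suc m))"
        using v parts by (simp add: reduced_words_def N_def)
      ultimately show "tr_spanned (reduced_words N) (\<alpha> @ v @ replicate l (T N) @ \<gamma>)"
        using less.hyps unfolding N_def by blast
    qed (simp add: valid N_def)
    with eq show ?thesis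
      unfolding N_def by (rule tr_spanned_tr_eq)
  qed
qed

lemma tr_spanned_reduced_words: "w \<in> words (Suc N) \<Longrightarrow> tr_spanned (reduced_words N) w"
proof (induct N arbitrary: w)
  case 0
  then have "G 0 \<notin> set w" by (auto simp: words_def)
  with 0 show ?case
    by (intro tr_spanned_if_mem) (simp add: reduced_words_def)
next
  case (Suc m)
  then show ?case by (rule tr_spanned_reduced_words_Suc)
qed

section \<open>The values \<open>tr (p c_{i,i+1} q)\<close>\<close>

text \<open>\<open>tr_c i p q\<close> is \<open>tr (p c_{i,i+1} q)\<close>: \<open>tr_cterm i p y q\<close> is the contribution of the
  summand \<open>g_w = y\<close> of \<open>g_{i,i+1}\<close>.\<close>
definition tr_cterm :: "nat \<Rightarrow> gen list \<Rightarrow> gen list \<Rightarrow> gen list \<Rightarrow> complex" where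
  "tr_cterm i p y q = (\<Sum>a<d. \<Sum>b<d. \<Sum>c<d. tr (p @ t_mono i a b c @ y @ q))"

definition tr_c :: "nat \<Rightarrow> gen list \<Rightarrow> gen list \<Rightarrow> complex" where
  "tr_c i p q = tr_cterm i p [] q + tr_cterm i p [G i] q + tr_cterm i p [G (Suc i)] q
     + tr_cterm i p [G i, G (Suc i)] q + tr_cterm i p [G (Suc i), G i] q
     + tr_cterm i p [G i, G (Suc i), G i] q"

lemma ftr_cc: "ftr tr (fmul (fmul (wd p) (cc d i)) (wd q)) = tr_c i p q"
proof -
  have "ftr tr (fmul (fmul (wd p) (cc d i)) (wd q)) = ftr (\<lambda>w. tr (p @ w @ q)) (cc d i)"
    by (rule ftr_in_context)
  also have "\<dots> = (\<Sum>a<d. \<Sum>b<d. \<Sum>c<d.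
      tr (p @ t_mono i a b c @ q) + tr (p @ t_mono i a b c @ G i # q) + tr (p @ t_mono i a b c @ G (Suc i) # q)
      + tr (p @ t_mono i a b c @ G i # G (Suc i) # q) + tr (p @ t_mono i a b c @ G (Suc i) # G i # q)
      + tr (p @ t_mono i a b c @ G i # G (Suc i) # G i # q))"
    by (simp add: cc_def ftr_fmul gsum_def sum_list_map_upt_0 t_mono_def comp_def add.assoc
        sum_list_concat_map)
  also have "\<dots> = tr_c i p q"
    by (simp add: tr_c_def tr_cterm_def sum.distrib)
  finally show ?thesis .
qed

lemma tr_t_mono_mod:
  "1 \<le> i \<Longrightarrow> valid_word p \<Longrightarrow> valid_word r \<Longrightarrow>
   tr (p @ t_mono i a b c @ r) = tr (p @ t_mono i (a mod d) (b mod d) (c mod d) @ r)"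
  by (rule tr_eqD[OF tr_eq_t_word_mod]) (auto simp: t_mono_def)

lemma tr_cterm_shift:
  assumes "1 \<le> i" "valid_word p" "valid_word y" "valid_word q"
  shows "(\<Sum>a<d. \<Sum>b<d. \<Sum>c<d. tr (p @ t_mono i (a + k1) (b + k2) (c + k3) @ y @ q)) = tr_cterm i p y q"
  unfolding tr_cterm_def
  by (rule sum3_lessThan_mod_shift[where f="\<lambda>a b c. tr (p @ t_mono i a b c @ y @ q)"], rule tr_t_mono_mod)
    (use assms in auto)

lemma tr_cterm_tr_eq:
  "tr_eq y y' \<Longrightarrow> 1 \<le> i \<Longrightarrow> valid_word p \<Longrightarrow> valid_word q \<Longrightarrow> tr_cterm i p y q = tr_cterm i p y' q"
  unfolding tr_cterm_def
  by (intro sum.cong refl) (metis tr_eqD tr_eq_append_left valid_word_t_mono valid_word_append append.assoc)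

lemma tr_cterm_T:
  assumes "1 \<le> i" "j = i \<or> j = Suc i \<or> j = Suc (Suc i)" "valid_word p" "valid_word y" "valid_word q"
  shows "tr_cterm i (p @ [T j]) y q = tr_cterm i p y q"
proof -
  define k1 k2 k3 where "k1 = (if j = i then 1 else 0::nat)" and "k2 = (if j = Suc i then 1 else 0::nat)"
    and "k3 = (if j = Suc (Suc i) then 1 else 0::nat)"
  have "tr_eq (T j # t_mono i a b c) (t_mono i (a + k1) (b + k2) (c + k3))" for a b c
    by (rule tr_eq_t_word_mod) (use assms in \<open>auto simp: t_mono_def k1_def k2_def k3_def\<close>)
  from tr_eqD[OF this, of p "y @ q"] assms
  have "tr_cterm i (p @ [T j]) y q = (\<Sum>a<d. \<Sum>b<d. \<Sum>c<d. tr (p @ t_mono i (a + k1) (b + k2) (c + k3) @ y @ q))"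
    unfolding tr_cterm_def by simp
  also have "\<dots> = tr_cterm i p y q"
    by (rule tr_cterm_shift) (use assms in auto)
  finally show ?thesis .
qed

lemma tr_eq_G_t_mono:
  assumes "1 \<le> i"
  shows "tr_eq (G i # t_mono i a b c) (t_mono i b a c @ [G i])"
    and "tr_eq (G (Suc i) # t_mono i a b c) (t_mono i a c b @ [G (Suc i)])"
proof -
  have "tr_eq (map (s_act i) (t_mono i a b c) @ [G i]) (t_mono i b a c @ [G i])"
    by (rule tr_eq_append_right, rule tr_eq_t_word_mod) (use assms in \<open>auto simp: t_mono_def transpose_def\<close>)
  with tr_eq_G_t_word[OF t_word_t_mono[OF assms] assms] show "tr_eq (G i # t_mono i a b c) (t_mono i b a c @ [G i])"
    by (rule tr_eq_trans)
  have "tr_eq (map (s_act (Suc i)) (t_mono i a b c) @ [G (Suc i)]) (t_mono i a c b @ [G (Suc i)])"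
    by (rule tr_eq_append_right, rule tr_eq_t_word_mod) (use assms in \<open>auto simp: t_mono_def transpose_def\<close>)
  with tr_eq_G_t_word[OF t_word_t_mono[OF assms], of "Suc i"]
  show "tr_eq (G (Suc i) # t_mono i a b c) (t_mono i a c b @ [G (Suc i)])"
    by (auto intro: tr_eq_trans)
qed

lemma tr_cterm_G:
  assumes "1 \<le> i" "valid_word p" "valid_word y" "valid_word q"
  shows "tr_cterm i (p @ [G i]) y q = tr_cterm i p (G i # y) q"
    and "tr_cterm i (p @ [G (Suc i)]) y q = tr_cterm i p (G (Suc i) # y) q"
proof -
  have "tr_cterm i (p @ [G i]) y q = (\<Sum>a<d. \<Sum>b<d. \<Sum>c<d. tr (p @ t_mono i b a c @ G i # y @ q))"
    unfolding tr_cterm_def using tr_eqD[OF tr_eq_G_t_mono(1)[OF assms(1)], of p "y @ q"] assms by simp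
  also have "\<dots> = tr_cterm i p (G i # y) q"
    unfolding tr_cterm_def append_Cons by (rule sum.swap)
  finally show "tr_cterm i (p @ [G i]) y q = tr_cterm i p (G i # y) q" .
  have "tr_cterm i (p @ [G (Suc i)]) y q = (\<Sum>a<d. \<Sum>b<d. \<Sum>c<d. tr (p @ t_mono i a c b @ G (Suc i) # y @ q))"
    unfolding tr_cterm_def using tr_eqD[OF tr_eq_G_t_mono(2)[OF assms(1)], of p "y @ q"] assms by simp
  also have "\<dots> = tr_cterm i p (G (Suc i) # y) q"
    unfolding tr_cterm_def append_Cons by (intro sum.cong refl sum.swap)
  finally show "tr_cterm i (p @ [G (Suc i)]) y q = tr_cterm i p (G (Suc i) # y) q" .
qed

text \<open>Since the \<open>t\<close>-sum in \<open>c_{i,i+1}\<close> absorbs \<open>e_j\<close> for \<open>j \<in> {i, i+1}\<close>, the quadratic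
  relation becomes \<open>g_j^2 = u + (u - 1) g_j\<close> next to it.\<close>
lemma tr_cterm_quadratic:
  assumes "1 \<le> i" "j = i \<or> j = Suc i" "valid_word p" "valid_word y" "valid_word q"
  shows "tr_cterm i p (G j # G j # y) q = u * tr_cterm i p y q + (u - 1) * tr_cterm i p (G j # y) q"
proof -
  define k1 k2 k3 where "k1 = (\<lambda>s. if j = i then s else 0::nat)" and "k2 = (\<lambda>s. if j = i then d - s else s)"
    and "k3 = (\<lambda>s. if j = i then 0 else d - s)"
  have j: "1 \<le> j" using assms by auto
  have mono_e: "tr_eq (t_mono i a b c @ e_word d j s) (t_mono i (a + k1 s) (b + k2 s) (c + k3 s))" for a b c s
    by (rule tr_eq_t_word_mod) (use assms in \<open>auto simp: t_mono_def e_word_def k1_def k2_def k3_def\<close>)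
  have absorb: "tr (p @ t_mono i a b c @ e_word d j s @ r) = tr (p @ t_mono i (a + k1 s) (b + k2 s) (c + k3 s) @ r)"
    if "valid_word r" for a b c s r
    using tr_eqD[OF mono_e, of p r] assms that by simp
  have pointwise: "tr (p @ t_mono i a b c @ G j # G j # y @ q) = tr (p @ t_mono i a b c @ y @ q)
     + (u - 1) * (1 / of_nat d * (\<Sum>s<d. tr (p @ t_mono i (a + k1 s) (b + k2 s) (c + k3 s) @ y @ q)))
     + (u - 1) * (1 / of_nat d * (\<Sum>s<d. tr (p @ t_mono i (a + k1 s) (b + k2 s) (c + k3 s) @ G j # y @ q)))"
    for a b c
    using tr_quadratic[OF j, of "p @ t_mono i a b c" "y @ q"] absorb[of "y @ q"] absorb[of "G j # y @ q"]
      assms j valid_word_t_mono by simp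
  have avg: "(\<Sum>a<d. \<Sum>b<d. \<Sum>c<d. \<Sum>s<d. tr (p @ t_mono i (a + k1 s) (b + k2 s) (c + k3 s) @ r @ q))
      = of_nat d * tr_cterm i p r q" if "valid_word r" for r
  proof -
    have "(\<Sum>a<d. \<Sum>b<d. \<Sum>c<d. \<Sum>s<d. tr (p @ t_mono i (a + k1 s) (b + k2 s) (c + k3 s) @ r @ q))
        = (\<Sum>s<d. \<Sum>a<d. \<Sum>b<d. \<Sum>c<d. tr (p @ t_mono i (a + k1 s) (b + k2 s) (c + k3 s) @ r @ q))"
      by (rule sum4_lessThan_swap)
    also have "\<dots> = (\<Sum>s<d. tr_cterm i p r q)"
      by (rule sum.cong[OF refl], rule tr_cterm_shift) (use assms that in auto)
    finally show ?thesis by simp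
  qed
  have avg_G: "(\<Sum>a<d. \<Sum>b<d. \<Sum>c<d. \<Sum>s<d. tr (p @ t_mono i (a + k1 s) (b + k2 s) (c + k3 s) @ G j # y @ q))
      = of_nat d * tr_cterm i p (G j # y) q"
    using avg[of "G j # y"] j assms(4) by simp
  have "tr_cterm i p (G j # G j # y) q = tr_cterm i p y q
     + (u - 1) * (1 / of_nat d * (\<Sum>a<d. \<Sum>b<d. \<Sum>c<d. \<Sum>s<d. tr (p @ t_mono i (a + k1 s) (b + k2 s) (c + k3 s) @ y @ q)))
     + (u - 1) * (1 / of_nat d * (\<Sum>a<d. \<Sum>b<d. \<Sum>c<d. \<Sum>s<d. tr (p @ t_mono i (a + k1 s) (b + k2 s) (c + k3 s) @ G j # y @ q)))"
    unfolding tr_cterm_def by (simp only: pointwise sum.distrib sum_distrib_left append_Cons)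
  also have "\<dots> = u * tr_cterm i p y q + (u - 1) * tr_cterm i p (G j # y) q"
    unfolding avg[OF assms(4)] avg_G using d_pos by (simp add: algebra_simps)
  finally show ?thesis .
qed

lemma tr_c_T:
  assumes "1 \<le> i" "j = i \<or> j = Suc i \<or> j = Suc (Suc i)" "valid_word p" "valid_word q"
  shows "tr_c i (p @ [T j]) q = tr_c i p q"
  unfolding tr_c_def using tr_cterm_T[OF assms(1,2,3) _ assms(4)] assms(1) by simp

lemma tr_c_G_left:
  assumes "1 \<le> i" "valid_word p" "valid_word q"
  shows "tr_c i (p @ [G i]) q = u * tr_c i p q"
proof -
  have "tr_cterm i p (G i # G i # y) q = u * tr_cterm i p y q + (u - 1) * tr_cterm i p (G i # y) q"
    if "valid_word y" for y
    using tr_cterm_quadratic assms that by blast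
  with assms show ?thesis
    unfolding tr_c_def by (simp add: tr_cterm_G algebra_simps)
qed

lemma tr_c_G_right:
  assumes "1 \<le> i" "valid_word p" "valid_word q"
  shows "tr_c i (p @ [G (Suc i)]) q = u * tr_c i p q"
proof -
  have quad: "tr_cterm i p (G (Suc i) # G (Suc i) # y) q
      = u * tr_cterm i p y q + (u - 1) * tr_cterm i p (G (Suc i) # y) q" if "valid_word y" for y
    using tr_cterm_quadratic assms that by blast
  have braid: "tr_cterm i p [G (Suc i), G i, G (Suc i)] q = tr_cterm i p [G i, G (Suc i), G i] q"
    "tr_cterm i p [G (Suc i), G i, G (Suc i), G i] q = tr_cterm i p [G (Suc i), G (Suc i), G i, G (Suc i)] q"
    by (rule tr_cterm_tr_eq[OF tr_eq_braid], use assms in auto)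
       (rule tr_cterm_tr_eq[OF tr_eq_Cons[OF tr_eq_sym[OF tr_eq_braid]]], use assms in auto)
  show ?thesis
    using assms unfolding tr_c_def by (simp add: tr_cterm_G braid quad algebra_simps)
qed

text \<open>On \<open>Y_{d,3}\<close>, \<open>c_{1,2}\<close> is an eigenvector of left multiplication by every generator.\<close>
lemma tr_c1_words_3: assumes "tr_c 1 [] [] = 0" shows "w \<in> words 3 \<Longrightarrow> tr_c 1 w [] = 0"
proof (induct w rule: rev_induct)
  case (snoc g w)
  then have w: "w \<in> words 3" "valid_word w" "[g] \<in> words 3"
    using words_imp_valid_word by auto
  show ?case
  proof (cases g)
    case (G j)
    then have "j = 1 \<or> j = Suc 1" using w by auto
    then show ?thesis using tr_c_G_left[of 1 w "[]"] tr_c_G_right[of 1 w "[]"] snoc(1) w G by auto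
  next
    case (T j)
    then have "j = 1 \<or> j = Suc 1 \<or> j = Suc (Suc 1)" using w by auto
    then show ?thesis using tr_c_T[of 1 j w "[]"] snoc(1) w T by auto
  qed
qed (use assms in simp)

section \<open>Left multiplication by words of \<open>Y_{d,n}\<close>\<close>

lemma tr_expandsD:
  "tr_expands w Q \<Longrightarrow> valid_word a \<Longrightarrow> valid_word b \<Longrightarrow> tr (a @ w @ b) = ftr (\<lambda>v. tr (a @ v @ b)) Q"
  by (simp add: tr_expands_def)

lemma tr_cterm_expands:
  assumes "tr_expands w Q" "1 \<le> i" "valid_word y" "valid_word q"
  shows "tr_cterm i w y q = ftr (\<lambda>v. tr_cterm i v y q) Q"
proof -
  have "tr ([] @ w @ (t_mono i a b c @ y @ q)) = ftr (\<lambda>v. tr ([] @ v @ (t_mono i a b c @ y @ q))) Q" for a b c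
    by (rule tr_expandsD[OF assms(1)]) (use assms(2-4) valid_word_t_mono in auto)
  then show ?thesis
    unfolding tr_cterm_def ftr_sum by simp
qed

lemma tr_c_expands: "tr_expands w Q \<Longrightarrow> 1 \<le> i \<Longrightarrow> valid_word q \<Longrightarrow> tr_c i w q = ftr (\<lambda>v. tr_c i v q) Q"
  unfolding tr_c_def ftr_add using tr_cterm_expands by simp

lemma tr_c1_factor:
  assumes "\<And>R. R \<in> words 3 \<Longrightarrow> tr (v @ R) = k * tr (v' @ R)"
  shows "tr_c 1 v [] = k * tr_c 1 v' []"
proof -
  have "tr_cterm 1 v y [] = k * tr_cterm 1 v' y []" if "y \<in> words 3" for y
    unfolding tr_cterm_def sum_distrib_left
    by (intro sum.cong refl) (use assms that t_mono_words[of 1 3] in \<open>simp add: numeral_3_eq_3\<close>)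
  then show ?thesis
    unfolding tr_c_def by (simp add: algebra_simps numeral_3_eq_3)
qed

lemma tr_no_G_factor:
  assumes v': "v' \<in> words n" "tr_eq v (v' @ replicate k (T (Suc n)))" and R: "R \<in> words n"
  shows "tr (v @ R) = x (k mod d) * tr (v' @ R)"
proof -
  have "tr (v @ R) = tr (v' @ replicate k (T (Suc n)) @ R)"
    using tr_eqD[OF v'(2), of "[]" R] R words_imp_valid_word by simp
  also have "\<dots> = tr (v' @ R @ replicate k (T (Suc n)))"
    using tr_eqD[OF tr_eq_T_power_commute_lower[OF R, of "Suc n" k], of v' "[]"] v'(1) words_imp_valid_word
    by simp
  also have "\<dots> = x (k mod d) * tr (v' @ R)"
    using tr_markov_T_power[of "v' @ R" n k] v'(1) R by simp
  finally show ?thesis .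
qed

lemma tr_one_G_factor:
  assumes \<alpha>': "\<alpha>' \<in> words n" "tr_eq \<alpha> (\<alpha>' @ replicate ka (T (Suc n)))"
    and \<gamma>': "\<gamma>' \<in> words n" "tr_eq \<gamma> (\<gamma>' @ replicate kg (T (Suc n)))"
    and R: "R \<in> words n" and n: "1 \<le> n" and \<gamma>: "valid_word \<gamma>"
  shows "tr (\<alpha> @ G n # \<gamma> @ R) = z * tr (\<alpha>' @ replicate kg (T n) @ replicate ka (T n) @ \<gamma>' @ R)"
proof -
  have valid: "valid_word \<alpha>'" "valid_word \<gamma>'" "valid_word R"
    using \<alpha>'(1) \<gamma>'(1) R words_imp_valid_word by blast+
  have "tr (\<alpha> @ G n # \<gamma> @ R) = tr ((\<alpha>' @ replicate ka (T (Suc n))) @ G n # \<gamma> @ R)"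
    using tr_eqD[OF \<alpha>'(2), of "[]" "G n # \<gamma> @ R"] valid \<gamma> n by simp
  also have "\<dots> = tr ((\<alpha>' @ replicate ka (T (Suc n))) @ G n # (\<gamma>' @ replicate kg (T (Suc n))) @ R)"
    using tr_eqD[OF \<gamma>'(2), of "(\<alpha>' @ replicate ka (T (Suc n))) @ [G n]" R] valid n by simp
  also have "\<dots> = tr (\<alpha>' @ G n # replicate ka (T n) @ \<gamma>' @ replicate kg (T (Suc n)) @ R)"
    using tr_eqD[OF tr_eq_T_power_G[of n "Suc n" ka], of \<alpha>' "\<gamma>' @ replicate kg (T (Suc n)) @ R"] valid n
    by simp
  also have "\<dots> = tr (\<alpha>' @ G n # replicate ka (T n) @ \<gamma>' @ R @ replicate kg (T (Suc n)))"
    using tr_eqD[OF tr_eq_T_power_commute_lower[OF R, of "Suc n" kg], of "\<alpha>' @ G n # replicate ka (T n) @ \<gamma>'" "[]"]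
      valid n by simp
  also have "\<dots> = tr (replicate kg (T (Suc n)) @ \<alpha>' @ G n # replicate ka (T n) @ \<gamma>' @ R)"
    using tr_commute[of "\<alpha>' @ G n # replicate ka (T n) @ \<gamma>' @ R" "replicate kg (T (Suc n))"] valid n by simp
  also have "\<dots> = tr (\<alpha>' @ replicate kg (T (Suc n)) @ G n # replicate ka (T n) @ \<gamma>' @ R)"
    using tr_eqD[OF tr_eq_T_power_commute_lower[OF \<alpha>'(1), of "Suc n" kg], of "[]" "G n # replicate ka (T n) @ \<gamma>' @ R"]
      valid n by simp
  also have "\<dots> = tr (\<alpha>' @ G n # replicate kg (T n) @ replicate ka (T n) @ \<gamma>' @ R)"
    using tr_eqD[OF tr_eq_T_power_G[of n "Suc n" kg], of \<alpha>' "replicate ka (T n) @ \<gamma>' @ R"] valid n by simp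
  also have "\<dots> = tr ((replicate kg (T n) @ replicate ka (T n) @ \<gamma>' @ R @ \<alpha>') @ [G n])"
    using tr_commute[of "\<alpha>' @ [G n]" "replicate kg (T n) @ replicate ka (T n) @ \<gamma>' @ R"] valid n by simp
  also have "\<dots> = z * tr (replicate kg (T n) @ replicate ka (T n) @ \<gamma>' @ R @ \<alpha>')"
    by (rule tr_markov_G) (use n \<alpha>'(1) \<gamma>'(1) R in auto)
  also have "\<dots> = z * tr (\<alpha>' @ replicate kg (T n) @ replicate ka (T n) @ \<gamma>' @ R)"
    using tr_commute[of "\<alpha>'" "replicate kg (T n) @ replicate ka (T n) @ \<gamma>' @ R"] valid n by simp
  finally show ?thesis .
qed

lemma tr_reduced_word_factor:
  assumes "v \<in> reduced_words n" "1 \<le> n"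
  obtains v' k where "v' \<in> words n" "\<And>R. R \<in> words n \<Longrightarrow> tr (v @ R) = k * tr (v' @ R)"
proof (cases "count_list v (G n) = 0")
  case True
  with assms obtain v' k where v': "v' \<in> words n" "tr_eq v (v' @ replicate k (T (Suc n)))"
    by (auto simp: reduced_words_def count_list_0_iff elim: tr_eq_split_top_T)
  have "tr (v @ R) = x (k mod d) * tr (v' @ R)" if "R \<in> words n" for R
    using tr_no_G_factor[OF v' that] .
  with v'(1) that show ?thesis by blast
next
  case False
  with assms have v: "v \<in> words (Suc n)" "count_list v (G n) = Suc 0"
    by (auto simp: reduced_words_def)
  obtain \<alpha> \<gamma> where v_eq: "v = \<alpha> @ G n # \<gamma>" and "G n \<notin> set \<alpha>" "count_list \<gamma> (G n) = 0"
    using count_list_Suc_split_first[OF v(2)] by blast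
  then have parts: "\<alpha> \<in> words (Suc n)" "G n \<notin> set \<alpha>" "\<gamma> \<in> words (Suc n)" "G n \<notin> set \<gamma>"
    using v by (auto simp: count_list_0_iff)
  obtain \<alpha>' ka where \<alpha>': "\<alpha>' \<in> words n" "tr_eq \<alpha> (\<alpha>' @ replicate ka (T (Suc n)))"
    using tr_eq_split_top_T[OF parts(1,2)] by blast
  obtain \<gamma>' kg where \<gamma>': "\<gamma>' \<in> words n" "tr_eq \<gamma> (\<gamma>' @ replicate kg (T (Suc n)))"
    using tr_eq_split_top_T[OF parts(3,4)] by blast
  let ?W = "\<alpha>' @ replicate kg (T n) @ replicate ka (T n) @ \<gamma>'"
  have "tr (v @ R) = z * tr (?W @ R)" if "R \<in> words n" for R
    using tr_one_G_factor[OF \<alpha>' \<gamma>' that assms(2)] v_eq parts words_imp_valid_word by simp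
  moreover have "?W \<in> words n"
    using \<alpha>'(1) \<gamma>'(1) assms(2) by simp
  ultimately show ?thesis using that by blast
qed

lemma tr_c1_words_Suc:
  assumes n: "3 \<le> n" and IH: "\<And>w. w \<in> words n \<Longrightarrow> tr_c 1 w [] = 0" and w: "w \<in> words (Suc n)"
  shows "tr_c 1 w [] = 0"
proof -
  obtain Q where Q: "snd ` set Q \<subseteq> reduced_words n" "tr_expands w Q"
    using tr_spanned_reduced_words[OF w] unfolding tr_spanned_def by blast
  have reduced: "tr_c 1 v [] = 0" if v: "v \<in> reduced_words n" for v
  proof -
    obtain v' k where v': "v' \<in> words n" "\<And>R. R \<in> words n \<Longrightarrow> tr (v @ R) = k * tr (v' @ R)"
      using tr_reduced_word_factor[OF v] n by auto
    then have "tr_c 1 v [] = k * tr_c 1 v' []"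
      by (intro tr_c1_factor) (use n words_mono in blast)
    with IH[OF v'(1)] show ?thesis by simp
  qed
  have "tr_c 1 w [] = ftr (\<lambda>v. tr_c 1 v []) Q"
    by (rule tr_c_expands[OF Q(2)]) auto
  also have "\<dots> = 0"
    by (rule ftr_eq_0) (use Q(1) reduced in auto)
  finally show ?thesis .
qed

lemma tr_c1_words: assumes "tr_c 1 [] [] = 0" "3 \<le> n" shows "w \<in> words n \<Longrightarrow> tr_c 1 w [] = 0"
  using assms(2)
proof (induct n arbitrary: w rule: nat_induct_at_least)
  case base
  then show ?case using tr_c1_words_3[OF assms(1)] by blast
next
  case (Suc n)
  then show ?case using tr_c1_words_Suc by blast
qed

section \<open>From \<open>c_{i,i+1}\<close> to \<open>c_{i+1,i+2}\<close>\<close>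

lemma tr_G_e_word_sum:
  assumes "1 \<le> j" "valid_word l" "valid_word r"
  shows "(\<Sum>s<d. tr (l @ G j # e_word d j s @ r)) = (\<Sum>s<d. tr (l @ e_word d j s @ G j # r))"
proof -
  have "tr_eq (G j # e_word d j s) (e_word d j ((d - s) mod d) @ [G j])" if "s < d" for s
  proof -
    have "tr_eq (G j # e_word d j s) (map (s_act j) (e_word d j s) @ [G j])"
      by (rule tr_eq_G_t_word) (use assms in \<open>auto simp: e_word_def\<close>)
    also have "tr_eq \<dots> (e_word d j ((d - s) mod d) @ [G j])"
    proof (rule tr_eq_append_right, rule tr_eq_t_word_mod)
      fix k
      show "count (mset (map (s_act j) (e_word d j s))) (T k) mod d
          = count (mset (e_word d j ((d - s) mod d))) (T k) mod d"
        using that by (cases "s = 0") (auto simp: e_word_def)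
    qed (use assms in \<open>auto simp: e_word_def\<close>)
    finally show ?thesis .
  qed
  from tr_eqD[OF this, of _ l r] assms
  have "(\<Sum>s<d. tr (l @ G j # e_word d j s @ r)) = (\<Sum>s<d. tr (l @ e_word d j ((d - s) mod d) @ G j # r))"
    by (intro sum.cong refl) simp
  also have "\<dots> = (\<Sum>s<d. tr (l @ e_word d j s @ G j # r))"
    by (rule sum_lessThan_mod_reflect[where f="\<lambda>s. tr (l @ e_word d j s @ G j # r)"])
  finally show ?thesis .
qed

lemma tr_e_word_e_word_sum:
  assumes "1 \<le> j" "valid_word l" "valid_word r"
  shows "(\<Sum>s<d. \<Sum>t<d. tr (l @ e_word d j s @ e_word d j t @ r)) = of_nat d * (\<Sum>s<d. tr (l @ e_word d j s @ r))"
proof -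
  have "tr_eq (e_word d j s @ e_word d j t) (e_word d j ((s + t) mod d))" if "s < d" "t < d" for s t
    by (rule tr_eq_t_word_mod) (use assms that mod_diff_add_diff[OF that] in \<open>auto simp: e_word_def\<close>)
  from tr_eqD[OF this, of _ _ l r] assms
  have "(\<Sum>s<d. \<Sum>t<d. tr (l @ e_word d j s @ e_word d j t @ r))
      = (\<Sum>s<d. \<Sum>t<d. tr (l @ e_word d j ((s + t) mod d) @ r))"
    by (intro sum.cong refl) (simp add: e_word_valid_word)
  also have "\<dots> = (\<Sum>s<d. \<Sum>t<d. tr (l @ e_word d j t @ r))"
    by (intro sum.cong refl sum_lessThan_mod_shift')
  finally show ?thesis by simp
qed

definition g_inv :: "nat \<Rightarrow> fsum" where
  "g_inv j = [(1, [G j])] @ map (\<lambda>s. ((1 / u - 1) / of_nat d, e_word d j s)) [0..<d]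
     @ map (\<lambda>s. ((1 / u - 1) / of_nat d, e_word d j s @ [G j])) [0..<d]"

lemma ftr_g_inv: "ftr f (g_inv j) = f [G j] + (1 / u - 1) / of_nat d * (\<Sum>s<d. f (e_word d j s))
   + (1 / u - 1) / of_nat d * (\<Sum>s<d. f (e_word d j s @ [G j]))"
  by (simp add: g_inv_def ftr_map sum_list_map_upt_0 sum_distrib_left)

lemma g_inv_words: "1 \<le> j \<Longrightarrow> Suc j \<le> n \<Longrightarrow> p \<in> set (g_inv j) \<Longrightarrow> snd p \<in> words n"
  by (auto simp: g_inv_def e_word_def)

lemma tr_G_g_inv:
  assumes j: "1 \<le> j" and l: "valid_word l" and r: "valid_word r"
  shows "ftr (\<lambda>y. tr (l @ G j # y @ r)) (g_inv j) = tr (l @ r)"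
proof -
  define E where "E r' = (\<Sum>s<d. tr (l @ e_word d j s @ r'))" for r'
  have dn: "of_nat d \<noteq> (0::complex)" using d_pos by simp
  have quad: "tr (l @ G j # G j # r) = tr (l @ r) + (u - 1) / of_nat d * E r + (u - 1) / of_nat d * E (G j # r)"
    using tr_quadratic[OF j l r] unfolding E_def by simp
  have "(\<Sum>s<d. tr (l @ G j # e_word d j s @ G j # r)) = (\<Sum>s<d. tr (l @ e_word d j s @ G j # G j # r))"
    using tr_G_e_word_sum[OF j l, of "G j # r"] r j by simp
  also have "\<dots> = E r + (u - 1) / of_nat d * (\<Sum>s<d. \<Sum>t<d. tr (l @ e_word d j s @ e_word d j t @ r))
      + (u - 1) / of_nat d * (\<Sum>s<d. \<Sum>t<d. tr (l @ e_word d j s @ e_word d j t @ G j # r))"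
    using tr_quadratic[OF j, of "l @ e_word d j _" r] l r e_word_valid_word[OF j]
    by (simp add: E_def sum.distrib sum_distrib_left)
  also have "\<dots> = u * E r + (u - 1) * E (G j # r)"
    using tr_e_word_e_word_sum[OF j l r] tr_e_word_e_word_sum[OF j l, of "G j # r"] r j dn
    by (simp add: E_def field_simps)
  finally have conj: "(\<Sum>s<d. tr (l @ G j # e_word d j s @ G j # r)) = u * E r + (u - 1) * E (G j # r)" .
  have "ftr (\<lambda>y. tr (l @ G j # y @ r)) (g_inv j) = tr (l @ G j # G j # r)
      + (1 / u - 1) / of_nat d * E (G j # r) + (1 / u - 1) / of_nat d * (u * E r + (u - 1) * E (G j # r))"
    unfolding ftr_g_inv using tr_G_e_word_sum[OF j l r] conj by (simp add: E_def)
  also have "\<dots> = tr (l @ r)"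
    unfolding quad using u_nonzero dn by (simp add: field_simps)
  finally show ?thesis .
qed

lemma tr_c_insert_G_g_inv:
  assumes "1 \<le> j" "1 \<le> i" "valid_word p" "valid_word s" "valid_word r"
  shows "tr_c i p (s @ r) = ftr (\<lambda>w. tr_c i p (s @ G j # w @ r)) (g_inv j)"
proof -
  have "tr_cterm i p y (s @ r) = ftr (\<lambda>w. tr_cterm i p y (s @ G j # w @ r)) (g_inv j)" if "valid_word y" for y
  proof -
    have "tr (p @ t_mono i a b c @ y @ s @ r) = ftr (\<lambda>w. tr (p @ t_mono i a b c @ y @ s @ G j # w @ r)) (g_inv j)"
      for a b c
      using tr_G_g_inv[OF assms(1), of "p @ t_mono i a b c @ y @ s" r] assms that valid_word_t_mono by simp
    then show ?thesis
      unfolding tr_cterm_def ftr_sum by simp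
  qed
  then show ?thesis
    unfolding tr_c_def ftr_add using assms(1,2) by simp
qed

lemma tr_c_rotate: assumes "1 \<le> i" "valid_word p" "valid_word q" shows "tr_c i p q = tr_c i (q @ p) []"
proof -
  have "tr_cterm i p y q = tr_cterm i (q @ p) y []" if "valid_word y" for y
    unfolding tr_cterm_def
    by (intro sum.cong refl) (use tr_commute[of "p @ t_mono i _ _ _ @ y" q] assms that valid_word_t_mono in simp)
  then show ?thesis
    unfolding tr_c_def using assms by simp
qed

text \<open>Conjugation by \<open>g_i g_{i+1} g_{i+2}\<close> maps \<open>c_{i,i+1}\<close> to \<open>c_{i+1,i+2}\<close>.\<close>
definition g_shift :: "nat \<Rightarrow> gen list" where
  "g_shift i = [G i, G (Suc i), G (Suc (Suc i))]"

lemma tr_eq_g_shift_t_mono: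
  assumes "1 \<le> i"
  shows "tr_eq (g_shift i @ t_mono i a b c) (t_mono (Suc i) a b c @ g_shift i)"
proof -
  let ?M1 = "replicate a (T i) @ replicate b (T (Suc i)) @ replicate c (T (Suc (Suc (Suc i))))"
  let ?M2 = "replicate a (T i) @ replicate b (T (Suc (Suc i))) @ replicate c (T (Suc (Suc (Suc i))))"
  have "tr_eq (g_shift i @ t_mono i a b c) ([G i, G (Suc i)] @ (G (Suc (Suc i)) # t_mono i a b c))"
    by (simp add: g_shift_def)
  also have "tr_eq \<dots> ([G i, G (Suc i)] @ ?M1 @ [G (Suc (Suc i))])"
    using tr_eq_append_left[OF tr_eq_G_t_word[of "t_mono i a b c" "Suc (Suc i)"], of "[G i, G (Suc i)]"] assms
    by (simp add: t_mono_def transpose_def)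
  also have "tr_eq \<dots> ([G i] @ (?M2 @ [G (Suc i)]) @ [G (Suc (Suc i))])"
    using tr_eq_context[OF tr_eq_G_t_word[of ?M1 "Suc i"], of "[G i]" "[G (Suc (Suc i))]"] assms
    by (simp add: transpose_def)
  also have "tr_eq \<dots> ((t_mono (Suc i) a b c @ [G i]) @ [G (Suc i), G (Suc (Suc i))])"
    using tr_eq_append_right[OF tr_eq_G_t_word[of ?M2 i], of "[G (Suc i), G (Suc (Suc i))]"] assms
    by (simp add: t_mono_def transpose_def)
  finally show ?thesis by (simp add: g_shift_def)
qed

lemma tr_eq_g_shift_G:
  assumes "1 \<le> i" "valid_word r"
  shows "tr_eq (g_shift i @ G i # r) (G (Suc i) # g_shift i @ r)"
    and "tr_eq (g_shift i @ G (Suc i) # r) (G (Suc (Suc i)) # g_shift i @ r)"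
proof -
  have "tr_eq ([G i, G (Suc i)] @ [G (Suc (Suc i)), G i] @ r) ([G i, G (Suc i)] @ [G i, G (Suc (Suc i))] @ r)"
    by (rule tr_eq_context[OF tr_eq_G_G_far]) (use assms in auto)
  also have "tr_eq \<dots> ([] @ [G (Suc i), G i, G (Suc i)] @ (G (Suc (Suc i)) # r))"
    using tr_eq_context[OF tr_eq_sym[OF tr_eq_braid[OF assms(1)]], of "[]" "G (Suc (Suc i)) # r"] assms by simp
  finally show "tr_eq (g_shift i @ G i # r) (G (Suc i) # g_shift i @ r)"
    by (simp add: g_shift_def)
  have "tr_eq ([G i] @ [G (Suc i), G (Suc (Suc i)), G (Suc i)] @ r) ([G i] @ [G (Suc (Suc i)), G (Suc i), G (Suc (Suc i))] @ r)"
    by (rule tr_eq_context[OF tr_eq_sym[OF tr_eq_braid]]) (use assms in auto)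
  also have "tr_eq \<dots> ([] @ [G (Suc (Suc i)), G i] @ (G (Suc i) # G (Suc (Suc i)) # r))"
    using tr_eq_context[OF tr_eq_G_G_far[of i "Suc (Suc i)"], of "[]" "G (Suc i) # G (Suc (Suc i)) # r"] assms
    by simp
  finally show "tr_eq (g_shift i @ G (Suc i) # r) (G (Suc (Suc i)) # g_shift i @ r)"
    by (simp add: g_shift_def)
qed

lemma tr_eq_g_shift_words:
  assumes "1 \<le> i" "valid_word r"
  shows "tr_eq (g_shift i @ [] @ r) ([] @ g_shift i @ r)"
    "tr_eq (g_shift i @ [G i] @ r) ([G (Suc i)] @ g_shift i @ r)"
    "tr_eq (g_shift i @ [G (Suc i)] @ r) ([G (Suc (Suc i))] @ g_shift i @ r)"
    "tr_eq (g_shift i @ [G i, G (Suc i)] @ r) ([G (Suc i), G (Suc (Suc i))] @ g_shift i @ r)"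
    "tr_eq (g_shift i @ [G (Suc i), G i] @ r) ([G (Suc (Suc i)), G (Suc i)] @ g_shift i @ r)"
    "tr_eq (g_shift i @ [G i, G (Suc i), G i] @ r) ([G (Suc i), G (Suc (Suc i)), G (Suc i)] @ g_shift i @ r)"
proof -
  note G = tr_eq_g_shift_G[OF assms(1)]
  have v: "valid_word (G k # r)" if "1 \<le> k" for k using assms that by simp
  show "tr_eq (g_shift i @ [] @ r) ([] @ g_shift i @ r)" by simp
  show "tr_eq (g_shift i @ [G i] @ r) ([G (Suc i)] @ g_shift i @ r)" using G assms by simp
  show "tr_eq (g_shift i @ [G (Suc i)] @ r) ([G (Suc (Suc i))] @ g_shift i @ r)" using G assms by simp
  show "tr_eq (g_shift i @ [G i, G (Suc i)] @ r) ([G (Suc i), G (Suc (Suc i))] @ g_shift i @ r)"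
    using G(1)[OF v[of "Suc i"]] tr_eq_Cons[OF G(2)[OF assms(2)], of "G (Suc i)"] tr_eq_trans assms by simp
  show "tr_eq (g_shift i @ [G (Suc i), G i] @ r) ([G (Suc (Suc i)), G (Suc i)] @ g_shift i @ r)"
    using G(2)[OF v[of i]] tr_eq_Cons[OF G(1)[OF assms(2)], of "G (Suc (Suc i))"] tr_eq_trans assms by simp
  have "tr_eq (g_shift i @ G i # G (Suc i) # G i # r) (G (Suc i) # g_shift i @ G (Suc i) # G i # r)"
    using G(1)[of "G (Suc i) # G i # r"] assms by simp
  also have "tr_eq \<dots> (G (Suc i) # G (Suc (Suc i)) # g_shift i @ G i # r)"
    using tr_eq_Cons[OF G(2)[of "G i # r"], of "G (Suc i)"] assms by simp
  also have "tr_eq \<dots> (G (Suc i) # G (Suc (Suc i)) # G (Suc i) # g_shift i @ r)"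
    using tr_eq_context[OF G(1)[OF assms(2)], of "[G (Suc i), G (Suc (Suc i))]" "[]"] assms by simp
  finally show "tr_eq (g_shift i @ [G i, G (Suc i), G i] @ r) ([G (Suc i), G (Suc (Suc i)), G (Suc i)] @ g_shift i @ r)"
    by simp
qed

lemma tr_c_shift:
  assumes "1 \<le> i" "valid_word p" "valid_word r"
  shows "tr_c (Suc i) p (g_shift i @ r) = tr_c i (p @ g_shift i) r"
proof -
  have valid: "valid_word (g_shift i)" using assms by (simp add: g_shift_def)
  have cterm: "tr_cterm (Suc i) p y' (g_shift i @ r) = tr_cterm i (p @ g_shift i) y r"
    if y: "tr_eq (g_shift i @ y @ r) (y' @ g_shift i @ r)" "valid_word y" "valid_word y'" for y y'
    unfolding tr_cterm_def
  proof (intro sum.cong refl)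
    fix a b c
    have "tr (p @ g_shift i @ t_mono i a b c @ y @ r) = tr (p @ t_mono (Suc i) a b c @ g_shift i @ y @ r)"
      using tr_eqD[OF tr_eq_g_shift_t_mono[OF assms(1)], of p "y @ r"] assms y by simp
    also have "\<dots> = tr (p @ t_mono (Suc i) a b c @ y' @ g_shift i @ r)"
      using tr_eqD[OF y(1), of "p @ t_mono (Suc i) a b c" "[]"] assms valid_word_t_mono[of "Suc i"] by simp
    finally show "tr (p @ t_mono (Suc i) a b c @ y' @ g_shift i @ r) = tr ((p @ g_shift i) @ t_mono i a b c @ y @ r)"
      by simp
  qed
  note words = tr_eq_g_shift_words[OF assms(1,3)]
  show ?thesis
    unfolding tr_c_def using cterm[OF words(1)] cterm[OF words(2)] cterm[OF words(3)] cterm[OF words(4)]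
      cterm[OF words(5)] cterm[OF words(6)] assms(1)
    by simp
qed

lemma tr_c_vanishes_if_G_inserted:
  assumes "1 \<le> j" "Suc j \<le> n" "1 \<le> i" "valid_word p" "valid_word s" "valid_word r"
    and "\<And>w. w \<in> words n \<Longrightarrow> tr_c i p (s @ G j # w @ r) = 0"
  shows "tr_c i p (s @ r) = 0"
proof -
  have "tr_c i p (s @ r) = ftr (\<lambda>w. tr_c i p (s @ G j # w @ r)) (g_inv j)"
    using tr_c_insert_G_g_inv assms(1,3-6) by blast
  also have "\<dots> = 0"
    by (rule ftr_eq_0) (use assms(1,2,7) g_inv_words in blast)
  finally show ?thesis .
qed

text \<open>Inserting \<open>g_i g_{i+1} g_{i+2} g_{i+2}^{-1} g_{i+1}^{-1} g_i^{-1}\<close> in front of \<open>q\<close> turns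
  \<open>tr (p c_{i+1,i+2} q)\<close> into a combination of values \<open>tr (p' c_{i,i+1} q')\<close>.\<close>
lemma tr_c_Suc_vanishes:
  assumes i: "1 \<le> i" "Suc (Suc (Suc i)) \<le> n"
    and IH: "\<And>p q. p \<in> words n \<Longrightarrow> q \<in> words n \<Longrightarrow> tr_c i p q = 0"
    and p: "p \<in> words n" and q: "q \<in> words n"
  shows "tr_c (Suc i) p q = 0"
proof -
  have valid: "valid_word p" "valid_word q"
    using p q words_imp_valid_word by blast+
  have shift: "g_shift i \<in> words n"
    using i by (simp add: g_shift_def)
  have two: "tr_c (Suc i) p ([G i, G (Suc i)] @ y2 @ y1 @ q) = 0"
    if "y2 \<in> words n" "y1 \<in> words n" for y1 y2
  proof (rule tr_c_vanishes_if_G_inserted[where n=n])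
    fix w assume "w \<in> words n"
    then have "tr_c (Suc i) p (g_shift i @ w @ y2 @ y1 @ q) = tr_c i (p @ g_shift i) (w @ y2 @ y1 @ q)"
      using tr_c_shift[OF i(1) valid(1)] that valid words_imp_valid_word by simp
    also have "\<dots> = 0"
      using IH p q shift that \<open>w \<in> words n\<close> by simp
    finally show "tr_c (Suc i) p ([G i, G (Suc i)] @ G (Suc (Suc i)) # w @ y2 @ y1 @ q) = 0"
      by (simp add: g_shift_def)
  qed (use i valid that words_imp_valid_word in auto)
  have one: "tr_c (Suc i) p ([G i] @ y1 @ q) = 0" if "y1 \<in> words n" for y1
    by (rule tr_c_vanishes_if_G_inserted[where j="Suc i" and n=n])
      (use i valid that words_imp_valid_word two in auto)
  have "tr_c (Suc i) p ([] @ q) = 0"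
    by (rule tr_c_vanishes_if_G_inserted[where j=i and n=n]) (use i valid one in auto)
  then show ?thesis by simp
qed

lemma tr_c_vanishes:
  assumes "tr_c 1 [] [] = 0" "3 \<le> n"
  shows "1 \<le> i \<Longrightarrow> i + 2 \<le> n \<Longrightarrow> p \<in> words n \<Longrightarrow> q \<in> words n \<Longrightarrow> tr_c i p q = 0"
proof (induct i arbitrary: p q rule: nat_induct_at_least)
  case base
  then have "tr_c 1 p q = tr_c 1 (q @ p) []"
    by (intro tr_c_rotate) (auto simp: words_imp_valid_word)
  also have "\<dots> = 0"
    using tr_c1_words[OF assms] base by simp
  finally show ?case .
next
  case (Suc i)
  then show ?case using tr_c_Suc_vanishes[of i n] by simp
qed

section \<open>The value of \<open>tr (c_{1,2})\<close>\<close>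

lemma tr_T1_power: "tr (t_pow 1 a) = x (a mod d)"
  using tr_markov_T_power[of "[]" 0 a] tr_Nil by simp

lemma tr_T1_T2_power: "tr (t_pow 1 a @ t_pow 2 b) = x (a mod d) * x (b mod d)"
  using tr_markov_T_power[of "t_pow 1 a" 1 b] tr_T1_power by (simp add: numeral_2_eq_2)

lemma tr_t_mono_1: "tr (t_pow 1 a @ t_pow 2 b @ t_pow 3 c) = x (a mod d) * x (b mod d) * x (c mod d)"
  using tr_markov_T_power[of "t_pow 1 a @ t_pow 2 b" 2 c] tr_T1_T2_power
  by (simp add: numeral_2_eq_2 numeral_3_eq_3)

lemma tr_eq_T1_T2_power_mod:
  "tr_eq (t_pow 2 a @ t_pow 1 b @ t_pow 2 c) (t_pow 1 b @ t_pow 2 (a + c))"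
  by (rule tr_eq_t_word_mod) (auto simp: ac_simps)

lemma tr_T1_T2_power_G1: "tr (t_pow 1 a @ t_pow 2 b @ [G 1]) = z * x ((a + b) mod d)"
proof -
  have "tr (t_pow 1 a @ t_pow 2 b @ [G 1]) = tr (t_pow 1 a @ G 1 # t_pow 1 b)"
    using tr_eqD[OF tr_eq_T_power_G[of 1 2 b], of "t_pow 1 a" "[]"] by (simp add: transpose_def numeral_2_eq_2)
  also have "\<dots> = tr ((t_pow 1 b @ t_pow 1 a) @ [G 1])"
    using tr_commute[of "t_pow 1 a @ [G 1]" "t_pow 1 b"] by simp
  also have "\<dots> = z * x ((a + b) mod d)"
    using tr_markov_G[of 1 "t_pow 1 b @ t_pow 1 a"] tr_T1_power[of "b + a"]
    by (simp add: replicate_add[symmetric] add.commute)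
  finally show ?thesis .
qed

lemma tr_t_mono_1_G1: "tr (t_pow 1 a @ t_pow 2 b @ t_pow 3 c @ [G 1]) = z * x ((a + b) mod d) * x (c mod d)"
proof -
  have "tr (t_pow 1 a @ t_pow 2 b @ t_pow 3 c @ [G 1]) = tr ((t_pow 1 a @ t_pow 2 b @ [G 1]) @ t_pow 3 c)"
    using tr_eqD[OF tr_eq_T_power_G[of 1 3 c], of "t_pow 1 a @ t_pow 2 b" "[]"]
    by (simp add: transpose_def numeral_2_eq_2)
  also have "\<dots> = x (c mod d) * tr (t_pow 1 a @ t_pow 2 b @ [G 1])"
    using tr_markov_T_power[of "t_pow 1 a @ t_pow 2 b @ [G 1]" 2 c]
    by (simp add: numeral_3_eq_3)
  finally show ?thesis using tr_T1_T2_power_G1 by simp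
qed

lemma tr_t_mono_1_G2: "tr (t_pow 1 a @ t_pow 2 b @ t_pow 3 c @ [G 2]) = z * x (a mod d) * x ((b + c) mod d)"
proof -
  have "tr (t_pow 1 a @ t_pow 2 b @ t_pow 3 c @ [G 2]) = tr (t_pow 1 a @ t_pow 2 b @ G 2 # t_pow 2 c)"
    using tr_eqD[OF tr_eq_T_power_G[of 2 3 c], of "t_pow 1 a @ t_pow 2 b" "[]"]
    by (simp add: transpose_def numeral_2_eq_2 numeral_3_eq_3)
  also have "\<dots> = tr ((t_pow 2 c @ t_pow 1 a @ t_pow 2 b) @ [G 2])"
    using tr_commute[of "t_pow 1 a @ t_pow 2 b @ [G 2]" "t_pow 2 c"] by simp
  also have "\<dots> = z * tr (t_pow 2 c @ t_pow 1 a @ t_pow 2 b)"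
    by (rule tr_markov_G) auto
  also have "tr (t_pow 2 c @ t_pow 1 a @ t_pow 2 b) = tr (t_pow 1 a @ t_pow 2 (c + b))"
    using tr_eq_imp_eq[OF tr_eq_T1_T2_power_mod] .
  finally show ?thesis using tr_T1_T2_power by (simp add: add.commute)
qed

lemma tr_t_mono_1_G1_G2: "tr (t_pow 1 a @ t_pow 2 b @ t_pow 3 c @ [G 1, G 2]) = z * z * x ((a + b + c) mod d)"
proof -
  have "tr (t_pow 1 a @ t_pow 2 b @ t_pow 3 c @ [G 1, G 2]) = tr (t_pow 1 a @ t_pow 2 b @ G 1 # (t_pow 3 c @ [G 2]))"
    using tr_eqD[OF tr_eq_T_power_G[of 1 3 c], of "t_pow 1 a @ t_pow 2 b" "[G 2]"]
    by (simp add: transpose_def numeral_2_eq_2)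
  also have "\<dots> = tr (t_pow 1 a @ t_pow 2 b @ G 1 # G 2 # t_pow 2 c)"
    using tr_eqD[OF tr_eq_T_power_G[of 2 3 c], of "t_pow 1 a @ t_pow 2 b @ [G 1]" "[]"]
    by (simp add: transpose_def numeral_2_eq_2 numeral_3_eq_3)
  also have "\<dots> = tr ((t_pow 2 c @ t_pow 1 a @ t_pow 2 b @ [G 1]) @ [G 2])"
    using tr_commute[of "t_pow 1 a @ t_pow 2 b @ [G 1, G 2]" "t_pow 2 c"] by simp
  also have "\<dots> = z * tr (t_pow 2 c @ t_pow 1 a @ t_pow 2 b @ [G 1])"
    by (rule tr_markov_G) auto
  also have "tr (t_pow 2 c @ t_pow 1 a @ t_pow 2 b @ [G 1])
      = tr (t_pow 1 a @ t_pow 2 (c + b) @ [G 1])"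
    using tr_eqD[OF tr_eq_T1_T2_power_mod, of "[]" "[G 1]"] by simp
  finally show ?thesis using tr_T1_T2_power_G1[of a "c + b"] by (simp add: ac_simps)
qed

lemma tr_t_mono_1_G2_G1: "tr (t_pow 1 a @ t_pow 2 b @ t_pow 3 c @ [G 2, G 1]) = z * z * x ((a + b + c) mod d)"
proof -
  have "tr_eq (G 1 # t_pow 1 a @ t_pow 2 b @ t_pow 3 c) (map (s_act 1) (t_pow 1 a @ t_pow 2 b @ t_pow 3 c) @ [G 1])"
    by (rule tr_eq_G_t_word) auto
  from tr_eqD[OF this, of "[]" "[G 2]"]
  have swap: "tr ((G 1 # t_pow 1 a @ t_pow 2 b @ t_pow 3 c) @ [G 2]) = tr ((t_pow 2 a @ t_pow 1 b @ t_pow 3 c) @ [G 1, G 2])"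
    by (simp add: transpose_def numeral_2_eq_2 numeral_3_eq_3)
  have "tr_eq (t_pow 2 a @ t_pow 1 b @ t_pow 3 c) (t_pow 1 b @ t_pow 2 a @ t_pow 3 c)"
    by (rule tr_eq_t_word_mod) (auto simp: ac_simps)
  from tr_eqD[OF this, of "[]" "[G 1, G 2]"]
  have reorder: "tr ((t_pow 2 a @ t_pow 1 b @ t_pow 3 c) @ [G 1, G 2]) = tr (t_pow 1 b @ t_pow 2 a @ t_pow 3 c @ [G 1, G 2])"
    by simp
  have "tr (t_pow 1 a @ t_pow 2 b @ t_pow 3 c @ [G 2, G 1]) = tr ((G 1 # t_pow 1 a @ t_pow 2 b @ t_pow 3 c) @ [G 2])"
    using tr_commute[of "t_pow 1 a @ t_pow 2 b @ t_pow 3 c @ [G 2]" "[G 1]"] by simp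
  also have "\<dots> = tr (t_pow 1 b @ t_pow 2 a @ t_pow 3 c @ [G 1, G 2])"
    using swap reorder by simp
  finally show ?thesis using tr_t_mono_1_G1_G2[of b a c] by (simp add: ac_simps)
qed

lemma tr_T1_T2_power_e_word:
  assumes "s < d"
  shows "tr (t_pow 1 a @ t_pow 2 b @ e_word d 1 s) = x ((a + s) mod d) * x ((b + (d - s)) mod d)"
    and "tr (t_pow 1 a @ t_pow 2 b @ e_word d 1 s @ [G 1]) = z * x ((a + b) mod d)"
proof -
  have mod: "tr_eq ((t_pow 1 a @ t_pow 2 b) @ e_word d 1 s) (t_pow 1 (a + s) @ t_pow 2 (b + (d - s)))"
    by (rule tr_eq_t_word_mod) (auto simp: e_word_def ac_simps numeral_2_eq_2)
  show "tr (t_pow 1 a @ t_pow 2 b @ e_word d 1 s) = x ((a + s) mod d) * x ((b + (d - s)) mod d)"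
    using tr_eq_imp_eq[OF mod] tr_T1_T2_power by simp
  have "a + s + (b + (d - s)) = (a + b) + d"
    using assms by simp
  then have "(a + s + (b + (d - s))) mod d = (a + b) mod d"
    by (metis mod_add_self2)
  moreover have "tr (t_pow 1 a @ t_pow 2 b @ e_word d 1 s @ [G 1]) = tr (t_pow 1 (a + s) @ t_pow 2 (b + (d - s)) @ [G 1])"
    using tr_eqD[OF mod, of "[]" "[G 1]"] by simp
  ultimately show "tr (t_pow 1 a @ t_pow 2 b @ e_word d 1 s @ [G 1]) = z * x ((a + b) mod d)"
    using tr_T1_T2_power_G1[of "a + s" "b + (d - s)"] by simp
qed

lemma tr_t_mono_1_G1_G2_G1: "tr (t_pow 1 a @ t_pow 2 b @ t_pow 3 c @ [G 1, G 2, G 1]) = z * (x ((a + c) mod d) * x (b mod d)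
   + (u - 1) * (1 / of_nat d * (\<Sum>s<d. x ((a + c + s) mod d) * x ((b + (d - s)) mod d)))
   + (u - 1) * (z * x ((a + b + c) mod d)))"
proof -
  have "tr (t_pow 1 a @ t_pow 2 b @ t_pow 3 c @ [G 1, G 2, G 1]) = tr (t_pow 1 a @ t_pow 2 b @ G 1 # t_pow 3 c @ [G 2, G 1])"
    using tr_eqD[OF tr_eq_T_power_G[of 1 3 c], of "t_pow 1 a @ t_pow 2 b" "[G 2, G 1]"]
    by (simp add: transpose_def numeral_2_eq_2)
  also have "\<dots> = tr (t_pow 1 a @ t_pow 2 b @ G 1 # G 2 # t_pow 2 c @ [G 1])"
    using tr_eqD[OF tr_eq_T_power_G[of 2 3 c], of "t_pow 1 a @ t_pow 2 b @ [G 1]" "[G 1]"]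
    by (simp add: transpose_def numeral_2_eq_2 numeral_3_eq_3)
  also have "\<dots> = tr (t_pow 1 a @ t_pow 2 b @ G 1 # G 2 # G 1 # t_pow 1 c)"
    using tr_eqD[OF tr_eq_T_power_G[of 1 2 c], of "t_pow 1 a @ t_pow 2 b @ [G 1, G 2]" "[]"]
    by (simp add: transpose_def numeral_2_eq_2)
  also have "\<dots> = tr ((G 1 # t_pow 1 c @ t_pow 1 a @ t_pow 2 b @ [G 1]) @ [G 2])"
    using tr_commute[of "t_pow 1 a @ t_pow 2 b @ [G 1, G 2, G 1]" "t_pow 1 c"]
      tr_commute[of "t_pow 1 c @ t_pow 1 a @ t_pow 2 b @ [G 1, G 2]" "[G 1]"]
    by simp
  also have "\<dots> = z * tr (G 1 # t_pow 1 c @ t_pow 1 a @ t_pow 2 b @ [G 1])"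
    by (rule tr_markov_G) auto
  also have "tr (G 1 # t_pow 1 c @ t_pow 1 a @ t_pow 2 b @ [G 1])
      = tr ((t_pow 1 (c + a) @ t_pow 2 b) @ G 1 # G 1 # [])"
    using tr_commute[of "[G 1]" "t_pow 1 c @ t_pow 1 a @ t_pow 2 b @ [G 1]"]
    by (simp add: replicate_add)
  also have "\<dots> = tr (t_pow 1 (c + a) @ t_pow 2 b)
      + (u - 1) * (1 / of_nat d * (\<Sum>s<d. tr ((t_pow 1 (c + a) @ t_pow 2 b) @ e_word d 1 s @ [])))
      + (u - 1) * (1 / of_nat d * (\<Sum>s<d. tr ((t_pow 1 (c + a) @ t_pow 2 b) @ e_word d 1 s @ [G 1])))"
    using tr_quadratic[of 1 "t_pow 1 (c + a) @ t_pow 2 b" "[]"] by simp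
  also have "(\<Sum>s<d. tr ((t_pow 1 (c + a) @ t_pow 2 b) @ e_word d 1 s @ []))
      = (\<Sum>s<d. x ((a + c + s) mod d) * x ((b + (d - s)) mod d))"
  proof (intro sum.cong refl)
    fix s assume "s \<in> {..<d}"
    then show "tr ((t_pow 1 (c + a) @ t_pow 2 b) @ e_word d 1 s @ []) = x ((a + c + s) mod d) * x ((b + (d - s)) mod d)"
      using tr_T1_T2_power_e_word(1)[of s "c + a" b] by (simp add: ac_simps)
  qed
  also have "(\<Sum>s<d. tr ((t_pow 1 (c + a) @ t_pow 2 b) @ e_word d 1 s @ [G 1])) = (\<Sum>s<d. z * x ((a + b + c) mod d))"
  proof (intro sum.cong refl)
    fix s assume "s \<in> {..<d}"
    then show "tr ((t_pow 1 (c + a) @ t_pow 2 b) @ e_word d 1 s @ [G 1]) = z * x ((a + b + c) mod d)"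
      using tr_T1_T2_power_e_word(2)[of s "c + a" b] by (simp add: ac_simps)
  qed
  finally show ?thesis using d_pos tr_T1_T2_power by (simp add: add.commute)
qed

definition sum_x :: complex where
  "sum_x = (\<Sum>k<d. x k)"

lemma sum_x_mod_shift: "(\<Sum>c<d. x ((k + c) mod d)) = sum_x"
  using sum_lessThan_mod_shift'[of x k d] by (simp add: sum_x_def)

lemma sum_x_mod_shift': "(\<Sum>c<d. x ((c + k) mod d)) = sum_x"
  using sum_lessThan_mod_shift[of x k d] by (simp add: sum_x_def)

lemma sum_x_convolution:
  "(\<Sum>a<d. \<Sum>b<d. \<Sum>c<d. \<Sum>s<d. x ((a + c + s) mod d) * x ((b + (d - s)) mod d)) = of_nat d ^ 2 * sum_x ^ 2"
proof -
  have "(\<Sum>c<d. x ((a + c + s) mod d)) = sum_x" for a s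
    using sum_x_mod_shift[of "a + s"] by (simp add: ac_simps)
  then have "(\<Sum>c<d. \<Sum>s<d. x ((a + c + s) mod d) * x ((b + (d - s)) mod d)) = (\<Sum>s<d. sum_x * x ((b + (d - s)) mod d))"
    for a b by (subst sum.swap) (simp add: sum_distrib_right[symmetric])
  moreover have "(\<Sum>b<d. \<Sum>s<d. sum_x * x ((b + (d - s)) mod d)) = (\<Sum>s<d. \<Sum>b<d. sum_x * x ((b + (d - s)) mod d))"
    by (rule sum.swap)
  moreover have "\<dots> = (\<Sum>s<d. sum_x * sum_x)"
    by (intro sum.cong refl) (simp only: sum_distrib_left[symmetric] sum_x_mod_shift')
  ultimately show ?thesis by (simp add: power2_eq_square)
qed

lemma tr_cterm_1_Nil:
  "tr_cterm 1 [] [] [] = sum_x ^ 3"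
  "tr_cterm 1 [] [G 1] [] = z * of_nat d * sum_x ^ 2"
  "tr_cterm 1 [] [G 2] [] = z * of_nat d * sum_x ^ 2"
  "tr_cterm 1 [] [G 1, G 2] [] = z ^ 2 * of_nat d ^ 2 * sum_x"
  "tr_cterm 1 [] [G 2, G 1] [] = z ^ 2 * of_nat d ^ 2 * sum_x"
proof -
  note sums = sum_x_mod_shift sum_x_def[symmetric] power2_eq_square power3_eq_cube
    sum_distrib_left[symmetric] sum_distrib_right[symmetric] mult.assoc
  have "tr_cterm 1 [] [] [] = (\<Sum>a<d. \<Sum>b<d. \<Sum>c<d. x (a mod d) * x (b mod d) * x (c mod d))"
    unfolding tr_cterm_def t_mono_1 using tr_t_mono_1 by simp
  then show "tr_cterm 1 [] [] [] = sum_x ^ 3"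
    by (simp add: sums)
  have "tr_cterm 1 [] [G 1] [] = (\<Sum>a<d. \<Sum>b<d. \<Sum>c<d. z * x ((a + b) mod d) * x (c mod d))"
    unfolding tr_cterm_def t_mono_1 using tr_t_mono_1_G1 by simp
  then show "tr_cterm 1 [] [G 1] [] = z * of_nat d * sum_x ^ 2"
    by (simp add: sums)
  have "tr_cterm 1 [] [G 2] [] = (\<Sum>a<d. \<Sum>b<d. \<Sum>c<d. z * x (a mod d) * x ((b + c) mod d))"
    unfolding tr_cterm_def t_mono_1 using tr_t_mono_1_G2 by simp
  then show "tr_cterm 1 [] [G 2] [] = z * of_nat d * sum_x ^ 2"
    by (simp add: sums)
  have "tr_cterm 1 [] [G 1, G 2] [] = (\<Sum>a<d. \<Sum>b<d. \<Sum>c<d. z * z * x ((a + b + c) mod d))"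
    unfolding tr_cterm_def t_mono_1 using tr_t_mono_1_G1_G2 by simp
  then show "tr_cterm 1 [] [G 1, G 2] [] = z ^ 2 * of_nat d ^ 2 * sum_x"
    by (simp add: sums)
  have "tr_cterm 1 [] [G 2, G 1] [] = (\<Sum>a<d. \<Sum>b<d. \<Sum>c<d. z * z * x ((a + b + c) mod d))"
    unfolding tr_cterm_def t_mono_1 using tr_t_mono_1_G2_G1 by simp
  then show "tr_cterm 1 [] [G 2, G 1] [] = z ^ 2 * of_nat d ^ 2 * sum_x"
    by (simp add: sums)
qed

lemma tr_cterm_1_Nil_G1_G2_G1:
  "tr_cterm 1 [] [G 1, G 2, G 1] [] = z * (u * of_nat d * sum_x ^ 2 + (u - 1) * z * of_nat d ^ 2 * sum_x)"
proof -
  note sums = sum_x_mod_shift sum_x_def[symmetric] power2_eq_square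
    sum_distrib_left[symmetric] sum_distrib_right[symmetric] mult.assoc
  have "tr_cterm 1 [] [G 1, G 2, G 1] [] = (\<Sum>a<d. \<Sum>b<d. \<Sum>c<d. z * (x ((a + c) mod d) * x (b mod d)
       + (u - 1) * (1 / of_nat d * (\<Sum>s<d. x ((a + c + s) mod d) * x ((b + (d - s)) mod d)))
       + (u - 1) * (z * x ((a + b + c) mod d))))"
    unfolding tr_cterm_def t_mono_1 using tr_t_mono_1_G1_G2_G1 by simp
  also have "\<dots> = z * ((\<Sum>a<d. \<Sum>b<d. \<Sum>c<d. x ((a + c) mod d) * x (b mod d))
       + (u - 1) * (1 / of_nat d * (\<Sum>a<d. \<Sum>b<d. \<Sum>c<d. \<Sum>s<d. x ((a + c + s) mod d) * x ((b + (d - s)) mod d)))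
       + (u - 1) * (z * (\<Sum>a<d. \<Sum>b<d. \<Sum>c<d. x ((a + b + c) mod d))))"
    by (simp only: sum.distrib sum_distrib_left distrib_left)
  also have "(\<Sum>a<d. \<Sum>b<d. \<Sum>c<d. x ((a + c) mod d) * x (b mod d)) = of_nat d * sum_x ^ 2"
    by (simp add: sums sum.swap[of _ "{..<d}" "{..<d}"])
  also have "(\<Sum>a<d. \<Sum>b<d. \<Sum>c<d. x ((a + b + c) mod d)) = of_nat d ^ 2 * sum_x"
    by (simp add: sum_x_mod_shift power2_eq_square)
  also note sum_x_convolution
  finally show ?thesis
    using d_pos by (simp add: power2_eq_square field_simps)
qed

lemma tr_c_1_Nil:
  "tr_c 1 [] [] = sum_x ^ 3 + (u + 2) * of_nat d * z * sum_x ^ 2 + (u + 1) * of_nat d ^ 2 * z ^ 2 * sum_x"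
  unfolding tr_c_def using tr_cterm_1_Nil tr_cterm_1_Nil_G1_G2_G1
  by (simp add: numeral_2_eq_2 algebra_simps power2_eq_square)

lemma sum_EE: "(\<Sum>k<d. EE d x k) = sum_x ^ 2 / of_nat d"
proof -
  have "(\<Sum>k<d. EE d x k) = 1 / of_nat d * (\<Sum>k<d. \<Sum>s<d. x ((k + s) mod d) * x ((d - s) mod d))"
    by (simp add: EE_def sum_distrib_left)
  also have "(\<Sum>k<d. \<Sum>s<d. x ((k + s) mod d) * x ((d - s) mod d))
      = (\<Sum>s<d. \<Sum>k<d. x ((k + s) mod d) * x ((d - s) mod d))"
    by (rule sum.swap)
  also have "\<dots> = (\<Sum>s<d. sum_x * x ((d - s) mod d))"
    by (intro sum.cong refl) (simp add: sum_distrib_right[symmetric] sum_x_mod_shift')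
  also have "\<dots> = sum_x * sum_x"
    using sum_lessThan_mod_reflect[of x d] by (simp add: sum_distrib_left[symmetric] sum_x_def)
  finally show ?thesis by (simp add: power2_eq_square)
qed

lemma ftr_ee_ee: "ftr tr (fmul (ee d k 1) (ee d 0 2)) =
   1 / of_nat d ^ 2 * (\<Sum>s<d. \<Sum>r<d. x ((k + s) mod d) * x ((d - s + r) mod d) * x ((d - r) mod d))"
proof -
  have "ftr tr (fmul (ee d k 1) (ee d 0 2)) = (\<Sum>s<d. 1 / of_nat d * (1 / of_nat d *
      (\<Sum>r<d. tr (t_pow 1 (k + s) @ t_pow 2 (d - s) @ t_pow 2 r @ t_pow 3 (d - r)))))"
    by (simp add: ftr_fmul ee_def ftr_map sum_list_map_upt_0 ftr_ee numeral_2_eq_2 numeral_3_eq_3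
        sum_divide_distrib divide_divide_eq_left)
  also have "\<dots> = (\<Sum>s<d. 1 / of_nat d * (1 / of_nat d *
      (\<Sum>r<d. x ((k + s) mod d) * x ((d - s + r) mod d) * x ((d - r) mod d))))"
    using tr_t_mono_1 by (simp add: append_replicate_replicate)
  finally show ?thesis
    by (simp add: sum_distrib_left power2_eq_square)
qed

lemma sum_ftr_ee_ee: "(\<Sum>k<d. ftr tr (fmul (ee d k 1) (ee d 0 2))) = sum_x ^ 3 / of_nat d ^ 2"
proof -
  have reflect_shift: "(\<Sum>s<d. x ((d - s + r) mod d)) = sum_x" for r
  proof -
    have "(\<Sum>s<d. x ((d - s + r) mod d)) = (\<Sum>s<d. (\<lambda>t. x ((t + r) mod d)) ((d - s) mod d))"
      by (simp add: mod_add_left_eq)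
    also have "\<dots> = (\<Sum>t<d. x ((t + r) mod d))"
      by (rule sum_lessThan_mod_reflect)
    finally show ?thesis
      using sum_x_mod_shift' by simp
  qed
  have "(\<Sum>k<d. \<Sum>s<d. \<Sum>r<d. x ((k + s) mod d) * x ((d - s + r) mod d) * x ((d - r) mod d))
      = (\<Sum>s<d. \<Sum>r<d. \<Sum>k<d. x ((k + s) mod d) * x ((d - s + r) mod d) * x ((d - r) mod d))"
    by (subst sum.swap) (rule sum.cong[OF refl], rule sum.swap)
  also have "\<dots> = (\<Sum>s<d. \<Sum>r<d. sum_x * x ((d - s + r) mod d) * x ((d - r) mod d))"
    by (intro sum.cong refl) (simp add: sum_distrib_right[symmetric] sum_x_mod_shift')
  also have "\<dots> = (\<Sum>r<d. \<Sum>s<d. sum_x * x ((d - s + r) mod d) * x ((d - r) mod d))"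
    by (rule sum.swap)
  also have "\<dots> = (\<Sum>r<d. sum_x * sum_x * x ((d - r) mod d))"
    by (intro sum.cong refl) (simp only: sum_distrib_right[symmetric] sum_distrib_left[symmetric] reflect_shift)
  also have "\<dots> = sum_x ^ 3"
    using sum_lessThan_mod_reflect[of x d] by (simp add: sum_distrib_left[symmetric] sum_x_def power3_eq_cube)
  finally show ?thesis
    unfolding ftr_ee_ee sum_distrib_left[symmetric] by simp
qed

lemma tr_c_1_Nil_eq:
  "tr_c 1 [] [] = of_nat d ^ 2 * ((u + 1) * z ^ 2 * (\<Sum>k<d. x k) + (u + 2) * z * (\<Sum>k<d. EE d x k)
     + (\<Sum>k<d. ftr tr (fmul (ee d k 1) (ee d 0 2))))"
  using d_pos unfolding tr_c_1_Nil sum_EE sum_ftr_ee_ee sum_x_def[symmetric]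
  by (simp add: field_simps power2_eq_square power3_eq_cube)

lemma tr_c_vanishes_iff:
  assumes "3 \<le> n"
  shows "(\<forall>i p q. 1 \<le> i \<longrightarrow> i \<le> n - 2 \<longrightarrow> p \<in> words n \<longrightarrow> q \<in> words n \<longrightarrow> tr_c i p q = 0)
    \<longleftrightarrow> tr_c 1 [] [] = 0"
  using assms tr_c_vanishes[OF _ assms] by fastforce

end

theorem theorem6:
  fixes d n :: nat and u z :: complex and x :: "nat \<Rightarrow> complex"
    and tr :: "gen list \<Rightarrow> complex"
  assumes "d \<ge> 1" and "n \<ge> 3" and "u \<noteq> 0" and "x 0 = 1"
    and "markov_trace d u z x tr"
  shows "(\<forall>i a b. 1 \<le> i \<longrightarrow> i \<le> n - 2 \<longrightarrow> a \<in> words n \<longrightarrow> b \<in> words n \<longrightarrow>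
             ftr tr (fmul (fmul (wd a) (cc d i)) (wd b)) = 0)
         \<longleftrightarrow>
         (u + 1) * z^2 * (\<Sum>k<d. x k) + (u + 2) * z * (\<Sum>k<d. EE d x k)
           + (\<Sum>k<d. ftr tr (fmul (ee d k 1) (ee d 0 2))) = 0"
proof -
  interpret yh_trace d u z x tr
    using assms by unfold_locales auto
  have "of_nat d \<noteq> (0::complex)"
    using assms(1) by simp
  then show ?thesis
    unfolding ftr_cc tr_c_vanishes_iff[OF assms(2)] tr_c_1_Nil_eq by simp
qed

end
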